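(* The space $\mathbf{PQSym}=\bigoplus_{n\ge1}K[PF_n]$ spanned by all parking functions, with the operations $f\bullet_\gamma g=(f\times g)\cdot\gamma$, is a shuffle algebra, and it is the free shuffle algebra on the graded set $PPF=\bigcup_{n\ge1}PPF_n$ of prime parking functions (an element of $PPF_n$ having degree $n$); that is, the shuffle algebra morphism from the free shuffle algebra on $PPF$ to $\mathbf{PQSym}$ which is the identity on $PPF$ is an isomorphism.
   Context: Permutations $\sigma\in S_n$ are written as words $(\sigma(1),\dots,\sigma(n))$; $1_n$ is the identity, and $\sigma\cdot\tau$ denotes composition, $(\sigma\cdot\tau)(i)=\sigma(\tau(i))$. For $\sigma\in S_n$, $\tau\in S_m$, $\sigma\times\tau\in S_{n+m}$ is $(\sigma(1),\dots,\sigma(n),\tau(1)+n,\dots,\tau(m)+n)$. For nonnegative integers $n_1,\dots,n_r$ with sum $n$, $Sh(n_1,\dots,n_r)$ is the set of $\sigma\in S_n$ such that $\sigma^{-1}(n_1+\dots+n_{k-1}+1)<\dots<\sigma^{-1}(n_1+\dots+n_k)$ for every $k$. A shuffle algebra is a graded vector space $A=\bigoplus_{n\ge0}A_n$ over a field $K$ with linear maps $\bullet_\gamma:A_n\otimes A_m\to A_{n+m}$ for all $n,m\ge0$ and $\gamma\in Sh(n,m)$, such that for $x\in A_n$, $y\in A_m$, $z\in A_r$ one has $x\bullet_\gamma(y\bullet_\delta z)=(x\bullet_\sigma y)\bullet_\lambda z$ whenever $\gamma\in Sh(n,m+r)$, $\delta\in Sh(m,r)$, $\sigma\in Sh(n,m)$,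 $\lambda\in Sh(n+m,r)$ satisfy $(1_n\times\delta)\cdot\gamma=(\sigma\times1_r)\cdot\lambda$. The free shuffle algebra on a positively graded set is the shuffle algebra with the usual universal property among degree-preserving maps. A parking function of size $n$ is a map $f:\{1,\dots,n\}\to\{1,\dots,n\}$ (written $(f(1),\dots,f(n))$) whose nondecreasing rearrangement $f^\uparrow$ satisfies $f^\uparrow(i)\le i$ for all $i$; $PF_n$ is the set of them, of degree $n$. For $f\in PF_n$, $g\in PF_m$: $f\times g=(f(1),\dots,f(n),g(1)+n,\dots,g(m)+n)$, and $(h\cdot\gamma)(i)=h(\gamma(i))$ for $\gamma\in S_{n+m}$. An integer $b\in\{0,\dots,n\}$ is a breakpoint of $f\in PF_n$ if $|\{i: f(i)\le b\}|=b$. A parking function is prime if its only breakpoints are $0$ and $n$; $PPF_n$ denotes the set of prime parking functions of size $n$. *)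

theory Defs
  imports "HOL.Vector_Spaces" "HOL-Combinatorics.Permutations" "HOL-Library.Function_Algebras"
begin

text \<open>A permutation of S_n is a function nat => nat which permutes {1..n}
(and is the identity elsewhere). Composition is function composition.\<close>

definition perm_times :: "nat \<Rightarrow> nat \<Rightarrow> (nat \<Rightarrow> nat) \<Rightarrow> (nat \<Rightarrow> nat) \<Rightarrow> (nat \<Rightarrow> nat)" where
  "perm_times n m \<sigma> \<tau> = (\<lambda>i. if 1 \<le> i \<and> i \<le> n then \<sigma> i
                              else if n < i \<and> i \<le> n + m then \<tau> (i - n) + n
                              else i)"

definition Sh :: "nat \<Rightarrow> nat \<Rightarrow> (nat \<Rightarrow> nat) set" where
  "Sh n m = {\<gamma>. \<gamma> permutes {1..n+m} \<and>
                 strict_mono_on {1..n} (inv \<gamma>) \<and>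
                 strict_mono_on {n+1..n+m} (inv \<gamma>)}"

text \<open>A shuffle algebra over the field 'k: the homogeneous components A_n are
subspaces V n of a 'k-vector space 'a (scalar multiplication sc); the products
mu n m \<gamma> : A_n \<times> A_m \<rightarrow> A_(n+m) are bilinear for \<gamma> in Sh(n,m), and satisfy the
shuffle associativity axiom.\<close>

definition lin_on :: "('k::field \<Rightarrow> 'a::ab_group_add \<Rightarrow> 'a) \<Rightarrow> ('k \<Rightarrow> 'b::ab_group_add \<Rightarrow> 'b)
                      \<Rightarrow> 'a set \<Rightarrow> ('a \<Rightarrow> 'b) \<Rightarrow> bool" where
  "lin_on sc1 sc2 S f \<longleftrightarrow>
     (\<forall>x\<in>S. \<forall>y\<in>S. f (x + y) = f x + f y) \<and> (\<forall>c. \<forall>x\<in>S. f (sc1 c x) = sc2 c (f x))"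

definition shuffle_alg :: "('k::field \<Rightarrow> 'a::ab_group_add \<Rightarrow> 'a) \<Rightarrow> (nat \<Rightarrow> 'a set)
       \<Rightarrow> (nat \<Rightarrow> nat \<Rightarrow> (nat \<Rightarrow> nat) \<Rightarrow> 'a \<Rightarrow> 'a \<Rightarrow> 'a) \<Rightarrow> bool" where
  "shuffle_alg sc V mu \<longleftrightarrow>
     vector_space sc \<and>
     (\<forall>n. module.subspace sc (V n)) \<and>
     (\<forall>n m \<gamma>. \<gamma> \<in> Sh n m \<longrightarrow>
        (\<forall>x\<in>V n. \<forall>y\<in>V m. mu n m \<gamma> x y \<in> V (n + m)) \<and>
        (\<forall>y\<in>V m. lin_on sc sc (V n) (\<lambda>x. mu n m \<gamma> x y)) \<and>
        (\<forall>x\<in>V n. lin_on sc sc (V m) (\<lambda>y. mu n m \<gamma> x y))) \<and>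
     (\<forall>n m r \<gamma> \<delta> \<sigma> lam. \<gamma> \<in> Sh n (m + r) \<and> \<delta> \<in> Sh m r \<and> \<sigma> \<in> Sh n m \<and> lam \<in> Sh (n + m) r \<and>
        perm_times n (m + r) id \<delta> \<circ> \<gamma> = perm_times (n + m) r \<sigma> id \<circ> lam \<longrightarrow>
        (\<forall>x\<in>V n. \<forall>y\<in>V m. \<forall>z\<in>V r.
           mu n (m + r) \<gamma> x (mu m r \<delta> y z) = mu (n + m) r lam (mu n m \<sigma> x y) z))"

definition shuffle_hom :: "('k::field \<Rightarrow> 'a::ab_group_add \<Rightarrow> 'a) \<Rightarrow> (nat \<Rightarrow> 'a set)
       \<Rightarrow> (nat \<Rightarrow> nat \<Rightarrow> (nat \<Rightarrow> nat) \<Rightarrow> 'a \<Rightarrow> 'a \<Rightarrow> 'a)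
       \<Rightarrow> ('k \<Rightarrow> 'b::ab_group_add \<Rightarrow> 'b) \<Rightarrow> (nat \<Rightarrow> 'b set)
       \<Rightarrow> (nat \<Rightarrow> nat \<Rightarrow> (nat \<Rightarrow> nat) \<Rightarrow> 'b \<Rightarrow> 'b \<Rightarrow> 'b)
       \<Rightarrow> (nat \<Rightarrow> 'a \<Rightarrow> 'b) \<Rightarrow> bool" where
  "shuffle_hom sc1 V1 mu1 sc2 V2 mu2 \<Phi> \<longleftrightarrow>
     (\<forall>n. (\<forall>x\<in>V1 n. \<Phi> n x \<in> V2 n) \<and> lin_on sc1 sc2 (V1 n) (\<Phi> n)) \<and>
     (\<forall>n m \<gamma>. \<gamma> \<in> Sh n m \<longrightarrow> (\<forall>x\<in>V1 n. \<forall>y\<in>V1 m.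
        \<Phi> (n + m) (mu1 n m \<gamma> x y) = mu2 n m \<gamma> (\<Phi> n x) (\<Phi> m y)))"

text \<open>Universal property of the free shuffle algebra on the positively graded
set G (G n = elements of degree n), with structure map \<iota>, tested against all
shuffle algebras whose underlying vector space lives in type 'b.\<close>

definition free_shuffle_alg_on :: "'b::ab_group_add itself
       \<Rightarrow> ('k::field \<Rightarrow> 'a::ab_group_add \<Rightarrow> 'a) \<Rightarrow> (nat \<Rightarrow> 'a set)
       \<Rightarrow> (nat \<Rightarrow> nat \<Rightarrow> (nat \<Rightarrow> nat) \<Rightarrow> 'a \<Rightarrow> 'a \<Rightarrow> 'a)
       \<Rightarrow> (nat \<Rightarrow> 'g set) \<Rightarrow> (nat \<Rightarrow> 'g \<Rightarrow> 'a) \<Rightarrow> bool" where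
  "free_shuffle_alg_on (TYPE('b)) sc V mu G \<iota> \<longleftrightarrow>
     shuffle_alg sc V mu \<and> G 0 = {} \<and> (\<forall>n. \<forall>g\<in>G n. \<iota> n g \<in> V n) \<and>
     (\<forall>(sc2 :: 'k \<Rightarrow> 'b \<Rightarrow> 'b) V2 mu2 (\<phi> :: nat \<Rightarrow> 'g \<Rightarrow> 'b).
        shuffle_alg sc2 V2 mu2 \<and> (\<forall>n. \<forall>g\<in>G n. \<phi> n g \<in> V2 n) \<longrightarrow>
        (\<exists>\<Phi>. shuffle_hom sc V mu sc2 V2 mu2 \<Phi> \<and> (\<forall>n. \<forall>g\<in>G n. \<Phi> n (\<iota> n g) = \<phi> n g) \<and>
           (\<forall>\<Psi>. shuffle_hom sc V mu sc2 V2 mu2 \<Psi> \<and> (\<forall>n. \<forall>g\<in>G n. \<Psi> n (\<iota> n g) = \<phi> n g)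
                 \<longrightarrow> (\<forall>n. \<forall>x\<in>V n. \<Psi> n x = \<Phi> n x))))"

text \<open>A parking function of size n is the word (f(1),...,f(n)), a list of length n.\<close>

definition is_pf :: "nat \<Rightarrow> nat list \<Rightarrow> bool" where
  "is_pf n f \<longleftrightarrow> length f = n \<and> set f \<subseteq> {1..n} \<and> (\<forall>i<n. sort f ! i \<le> i + 1)"

definition PF :: "nat \<Rightarrow> nat list set" where
  "PF n = {f. is_pf n f}"

definition is_breakpoint :: "nat \<Rightarrow> nat list \<Rightarrow> nat \<Rightarrow> bool" where
  "is_breakpoint n f b \<longleftrightarrow> b \<le> n \<and> card {i\<in>{1..n}. f ! (i - 1) \<le> b} = b"

definition PPF :: "nat \<Rightarrow> nat list set" where
  "PPF n = {f. n \<ge> 1 \<and> is_pf n f \<and> (\<forall>b. is_breakpoint n f b \<longrightarrow> b = 0 \<or> b = n)}"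

definition pf_times :: "nat \<Rightarrow> nat list \<Rightarrow> nat list \<Rightarrow> nat list" where
  "pf_times n f g = f @ map (\<lambda>x. x + n) g"

definition pf_act :: "nat list \<Rightarrow> (nat \<Rightarrow> nat) \<Rightarrow> nat list" where
  "pf_act h \<gamma> = map (\<lambda>i. h ! (\<gamma> i - 1)) [1..<length h + 1]"

text \<open>Elements of PQSym are 'k-valued functions on words; the degree n component
is K[PF_n] for n \<ge> 1 (functions supported on PF n) and 0 for n = 0.\<close>

definition PQ_V :: "nat \<Rightarrow> (nat list \<Rightarrow> 'k::field) set" where
  "PQ_V n = {x. \<forall>w. x w \<noteq> 0 \<longrightarrow> n \<ge> 1 \<and> w \<in> PF n}"

definition PQ_scale :: "'k::field \<Rightarrow> (nat list \<Rightarrow> 'k) \<Rightarrow> (nat list \<Rightarrow> 'k)" where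
  "PQ_scale c x = (\<lambda>w. c * x w)"

definition PQ_basis :: "nat \<Rightarrow> nat list \<Rightarrow> (nat list \<Rightarrow> 'k::field)" where
  "PQ_basis n f = (\<lambda>w. if w = f then 1 else 0)"

text \<open>Bilinear extension of f \<bullet>_\<gamma> g = (f \<times> g) . \<gamma>.\<close>
definition PQ_mult :: "nat \<Rightarrow> nat \<Rightarrow> (nat \<Rightarrow> nat) \<Rightarrow> (nat list \<Rightarrow> 'k::field)
                        \<Rightarrow> (nat list \<Rightarrow> 'k) \<Rightarrow> (nat list \<Rightarrow> 'k)" where
  "PQ_mult n m \<gamma> x y = (\<lambda>h. \<Sum>p\<in>PF n \<times> PF m.
        if pf_act (pf_times n (fst p) (snd p)) \<gamma> = h then x (fst p) * y (snd p) else 0)"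

end

theory Submission
  imports Defs
begin

text \<open>
  A parking function \<open>f\<close> of size \<open>n > 0\<close> has a first breakpoint \<open>b > 0\<close>. Its letters
  \<open>\<le> b\<close> form a prime parking function \<open>p\<close> of size \<open>b\<close>, the other letters lowered by \<open>b\<close>
  form a parking function \<open>r\<close>, and \<open>f = (p \<times> r) \<cdot> \<gamma>\<close> for a unique shuffle
  \<open>\<gamma> \<in> Sh(b, n - b)\<close>; conversely \<open>(p \<times> r) \<cdot> \<gamma>\<close> has first breakpoint \<open>b\<close> whenever \<open>p\<close>
  is prime. So every basis element of \<open>PQSym\<close> is uniquely \<open>p \<bullet>\<^sub>\<gamma> r\<close> with \<open>p\<close> prime
  and \<open>r\<close> shorter, and a morphism extending \<open>\<phi>\<close> on primes is forced to be
  \<open>\<beta>(f) = \<phi>(p) \<bullet>\<^sub>\<gamma> \<beta>(r)\<close>. This \<open>\<beta>\<close> is multiplicative by induction on the left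
  factor: in \<open>(p \<bullet> r) \<bullet> g\<close> the brackets can be moved to \<open>p \<bullet> (r \<bullet> g)\<close>, because every
  left-nested pair of shuffles is also a right-nested one. Associativity of \<open>PQSym\<close> itself
  reduces to the corresponding bracketing identity on words.
\<close>

section \<open>Shuffles as permutations\<close>

definition inv_mono_on :: "(nat \<Rightarrow> nat) \<Rightarrow> nat \<Rightarrow> nat set \<Rightarrow> bool" where
  "inv_mono_on p N A \<longleftrightarrow>
     (\<forall>i\<in>{1..N}. \<forall>i'\<in>{1..N}. p i \<in> A \<longrightarrow> p i' \<in> A \<longrightarrow> p i < p i' \<longrightarrow> i < i')"

definition rank_in :: "nat set \<Rightarrow> nat \<Rightarrow> nat" where
  "rank_in S i = card {j\<in>S. j \<le> i}"

text \<open>For \<open>card S = b\<close>, the shuffle in \<open>Sh b (N - b)\<close> that sends \<open>S\<close> onto \<open>{1..b}\<close> and its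
  complement onto \<open>{b+1..N}\<close>, both in increasing order.\<close>

definition shuffle_of_set :: "nat \<Rightarrow> nat \<Rightarrow> nat set \<Rightarrow> nat \<Rightarrow> nat" where
  "shuffle_of_set b N S =
     (\<lambda>i. if i \<in> {1..N} then (if i \<in> S then rank_in S i else b + rank_in ({1..N} - S) i) else i)"

lemma permutes_inv_mem:
  assumes "p permutes S" "x \<in> S"
  shows "inv p x \<in> S" "p (inv p x) = x"
  using permutes_in_image[OF permutes_inv[OF assms(1)]] permutes_inverses(1)[OF assms(1)] assms(2)
  by auto

lemma strict_mono_on_inv_iff_inv_mono_on:
  assumes p: "p permutes {1..N}" and A: "A \<subseteq> {1..N}"
  shows "strict_mono_on A (inv p) \<longleftrightarrow> inv_mono_on p N A"
proof
  assume h: "strict_mono_on A (inv p)"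
  show "inv_mono_on p N A" unfolding inv_mono_on_def
  proof (intro ballI impI)
    fix i i' assume "p i \<in> A" "p i' \<in> A" "p i < p i'"
    then have "inv p (p i) < inv p (p i')" using h by (simp add: strict_mono_on_def)
    then show "i < i'" using permutes_inverses(2)[OF p] by simp
  qed
next
  assume h: "inv_mono_on p N A"
  show "strict_mono_on A (inv p)" unfolding strict_mono_on_def
  proof (intro allI impI)
    fix r s assume rs: "r \<in> A \<and> s \<in> A \<and> r < s"
    have "inv p r \<in> {1..N}" "inv p s \<in> {1..N}" "p (inv p r) = r" "p (inv p s) = s"
      using rs A permutes_inv_mem[OF p] by auto
    then show "inv p r < inv p s" using h rs unfolding inv_mono_on_def by metis
  qed
qed

lemma Sh_iff:
  "\<gamma> \<in> Sh b c \<longleftrightarrow>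
     \<gamma> permutes {1..b+c} \<and> inv_mono_on \<gamma> (b+c) {1..b} \<and> inv_mono_on \<gamma> (b+c) {b+1..b+c}"
  unfolding Sh_def
  using strict_mono_on_inv_iff_inv_mono_on[of \<gamma> "b+c" "{1..b}"]
    strict_mono_on_inv_iff_inv_mono_on[of \<gamma> "b+c" "{b+1..b+c}"]
  by auto

lemma Sh_permutes: "\<gamma> \<in> Sh n m \<Longrightarrow> \<gamma> permutes {1..n+m}"
  unfolding Sh_def by simp

lemma inv_mono_onD:
  assumes p: "p permutes {1..N}" and inc: "inv_mono_on p N A"
    and i: "i \<in> {1..N}" "i' \<in> {1..N}" "p i \<in> A" "p i' \<in> A" "i < i'"
  shows "p i < p i'"
proof -
  have "p i \<noteq> p i'" using permutes_inj[OF p] i(5) by (auto simp: inj_eq)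
  moreover have "\<not> p i' < p i"
  proof
    assume "p i' < p i"
    then have "i' < i" using inc i(1-4) unfolding inv_mono_on_def by blast
    then show False using i(5) by simp
  qed
  ultimately show ?thesis by simp
qed

lemma permutes_if_inj_on:
  assumes "f ` {1..N} \<subseteq> {1..(N::nat)}" "inj_on f {1..N}" "\<And>x. x \<notin> {1..N} \<Longrightarrow> f x = x"
  shows "f permutes {1..N}"
proof -
  have "f ` {1..N} = {1..N}" using endo_inj_surj[OF _ assms(1,2)] by simp
  then have "bij_betw f {1..N} {1..N}" using assms(2) by (simp add: bij_betw_def)
  then show ?thesis using assms(3) by (intro bij_imp_permutes) auto
qed

lemma rank_in_mono: "finite S \<Longrightarrow> i \<le> i' \<Longrightarrow> rank_in S i \<le> rank_in S i'"
  unfolding rank_in_def by (rule card_mono) auto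

lemma rank_in_strict_mono: "finite S \<Longrightarrow> strict_mono_on S (rank_in S)"
  unfolding strict_mono_on_def rank_in_def
proof (intro allI impI psubset_card_mono)
  fix i i' assume "finite S" "i \<in> S \<and> i' \<in> S \<and> i < i'"
  then have "finite {j \<in> S. j \<le> i'}" "{j \<in> S. j \<le> i} \<subseteq> {j \<in> S. j \<le> i'}"
    "i' \<in> {j \<in> S. j \<le> i'} - {j \<in> S. j \<le> i}" by auto
  then show "finite {j \<in> S. j \<le> i'}" "{j \<in> S. j \<le> i} \<subset> {j \<in> S. j \<le> i'}" by blast+
qed

lemma rank_in_pos: "finite S \<Longrightarrow> i \<in> S \<Longrightarrow> 1 \<le> rank_in S i"
  unfolding rank_in_def using card_gt_0_iff[of "{j\<in>S. j \<le> i}"] by fastforce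

lemma rank_in_le_card: "finite S \<Longrightarrow> rank_in S i \<le> card S"
  unfolding rank_in_def by (rule card_mono) auto

lemma inv_mono_on_eq_rank_in:
  assumes p: "p permutes {1..N}" and inc: "inv_mono_on p N {a+1..a+k}" and ak: "a + k \<le> N"
    and i: "i \<in> {1..N}" "p i \<in> {a+1..a+k}"
  shows "p i = a + rank_in {j\<in>{1..N}. p j \<in> {a+1..a+k}} i"
proof -
  let ?T = "{j\<in>{1..N}. p j \<in> {a+1..a+k}}"
  have img: "p ` {j\<in>?T. j \<le> i} = {a+1..p i}"
  proof (intro equalityI subsetI)
    fix y assume "y \<in> p ` {j\<in>?T. j \<le> i}"
    then obtain j where j: "j \<in> ?T" "j \<le> i" "y = p j" by auto
    then have "\<not> p i < p j" using inc i unfolding inv_mono_on_def by fastforce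
    then show "y \<in> {a+1..p i}" using j by auto
  next
    fix y assume y: "y \<in> {a+1..p i}"
    then have "y \<in> {1..N}" using i ak by auto
    then have j: "inv p y \<in> {1..N}" "p (inv p y) = y" using permutes_inv_mem[OF p] by auto
    have "inv p y \<le> i"
    proof (cases "y = p i")
      case True
      then show ?thesis using permutes_inverses(2)[OF p] by simp
    next
      case False
      then have "p (inv p y) < p i" "p (inv p y) \<in> {a+1..a+k}" using i j y by auto
      then have "inv p y < i" using inc i j(1) unfolding inv_mono_on_def by blast
      then show ?thesis by simp
    qed
    then show "y \<in> p ` {j\<in>?T. j \<le> i}" using j y i by (auto intro!: image_eqI[of _ _ "inv p y"])
  qed
  have "inj_on p {j\<in>?T. j \<le> i}" using permutes_inj[OF p] inj_on_subset by blast
  then have "rank_in ?T i = p i - a" unfolding rank_in_def using card_image img by fastforce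
  then show ?thesis using i by simp
qed

context
  fixes S :: "nat set" and b N :: nat
  assumes S_sub: "S \<subseteq> {1..N}" and card_S: "card S = b"
begin

private lemma finite_S: "finite S"
  using S_sub finite_subset by blast

private lemma card_complement: "card ({1..N} - S) = N - b"
  using card_Diff_subset[OF finite_S S_sub] card_S by simp

private lemma rank_in_bounds:
  "i \<in> S \<Longrightarrow> 1 \<le> rank_in S i \<and> rank_in S i \<le> b"
  "i \<in> {1..N} - S \<Longrightarrow> 1 \<le> rank_in ({1..N} - S) i \<and> rank_in ({1..N} - S) i \<le> N - b"
  using rank_in_pos[OF finite_S] rank_in_le_card[OF finite_S] card_S
    rank_in_pos[of "{1..N} - S"] rank_in_le_card[of "{1..N} - S"] card_complement by auto

private lemma shuffle_of_set_on_set: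
  "i \<in> S \<Longrightarrow> shuffle_of_set b N S i = rank_in S i"
  "i \<in> {1..N} - S \<Longrightarrow> shuffle_of_set b N S i = b + rank_in ({1..N} - S) i"
  using S_sub unfolding shuffle_of_set_def by auto

lemma shuffle_of_set_le_iff: "i \<in> {1..N} \<Longrightarrow> shuffle_of_set b N S i \<le> b \<longleftrightarrow> i \<in> S"
  using rank_in_bounds[of i] unfolding shuffle_of_set_def by auto

lemma shuffle_of_set_permutes: "shuffle_of_set b N S permutes {1..N}"
proof (rule permutes_if_inj_on)
  let ?g = "shuffle_of_set b N S" and ?C = "{1..N} - S"
  have bN: "b \<le> N" using card_S card_mono[OF _ S_sub] by fastforce
  show "?g ` {1..N} \<subseteq> {1..N}"
    using rank_in_bounds bN unfolding shuffle_of_set_def by fastforce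
  have "inj_on (rank_in S) S" "inj_on (\<lambda>i. b + rank_in ?C i) ?C"
    using rank_in_strict_mono[OF finite_S] rank_in_strict_mono[of ?C]
    by (auto intro!: strict_mono_on_imp_inj_on simp: strict_mono_on_def)
  then have inj: "inj_on ?g S" "inj_on ?g ?C"
    by (subst inj_on_cong; simp add: shuffle_of_set_on_set)+
  have "?g ` S \<subseteq> {..b}" "?g ` ?C \<subseteq> {b<..}"
    using rank_in_bounds shuffle_of_set_on_set by (simp_all add: image_subset_iff Suc_le_eq)
  moreover have "S - ?C = S" "?C - S = ?C" "{..b} \<inter> {b<..} = {}" by auto
  ultimately have "?g ` (S - ?C) \<inter> ?g ` (?C - S) = {}" by blast
  moreover have "{1..N} = S \<union> ?C" using S_sub by blast
  ultimately show "inj_on ?g {1..N}" using inj by (metis inj_on_Un)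
  show "?g x = x" if "x \<notin> {1..N}" for x unfolding shuffle_of_set_def if_not_P[OF that] ..
qed

lemma shuffle_of_set_in_Sh: "shuffle_of_set b N S \<in> Sh b (N - b)"
proof -
  let ?g = "shuffle_of_set b N S" and ?C = "{1..N} - S"
  have bN: "b \<le> N" using card_S card_mono[OF _ S_sub] by fastforce
  have "inv_mono_on ?g N {1..b}" unfolding inv_mono_on_def
  proof (intro ballI impI)
    fix i i' assume i: "i \<in> {1..N}" "i' \<in> {1..N}" "?g i \<in> {1..b}" "?g i' \<in> {1..b}" "?g i < ?g i'"
    then have "i \<in> S" "i' \<in> S" using shuffle_of_set_le_iff by auto
    then have "rank_in S i < rank_in S i'" using i(5) by (simp add: shuffle_of_set_on_set)
    then show "i < i'" using rank_in_mono[OF finite_S, of i' i] by linarith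
  qed
  moreover have "inv_mono_on ?g N {b+1..N}" unfolding inv_mono_on_def
  proof (intro ballI impI)
    fix i i' assume i: "i \<in> {1..N}" "i' \<in> {1..N}" "?g i \<in> {b+1..N}" "?g i' \<in> {b+1..N}" "?g i < ?g i'"
    then have "i \<in> ?C" "i' \<in> ?C" using shuffle_of_set_le_iff[of i] shuffle_of_set_le_iff[of i'] by auto
    then have "rank_in ?C i < rank_in ?C i'" using i(5) by (simp add: shuffle_of_set_on_set)
    then show "i < i'" using rank_in_mono[of ?C i' i] by fastforce
  qed
  ultimately show ?thesis unfolding Sh_iff using shuffle_of_set_permutes bN by simp
qed

end

lemma Sh_eq_shuffle_of_set:
  assumes g: "\<gamma> \<in> Sh b c"
  shows "\<gamma> = shuffle_of_set b (b+c) {i\<in>{1..b+c}. \<gamma> i \<le> b}"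
proof
  fix i
  let ?N = "b + c" and ?S = "{i\<in>{1..b+c}. \<gamma> i \<le> b}"
  have p: "\<gamma> permutes {1..?N}" and inc1: "inv_mono_on \<gamma> ?N {0+1..0+b}"
    and inc2: "inv_mono_on \<gamma> ?N {b+1..b+c}"
    using g unfolding Sh_iff by auto
  have im: "\<gamma> j \<in> {1..?N}" if "j \<in> {1..?N}" for j using permutes_in_image[OF p] that by simp
  show "\<gamma> i = shuffle_of_set b ?N ?S i"
  proof (cases "i \<in> {1..?N}")
    case False
    then have "\<gamma> i = i" using permutes_not_in[OF p] by simp
    then show ?thesis unfolding shuffle_of_set_def if_not_P[OF False] .
  next
    case True
    show ?thesis
    proof (cases "\<gamma> i \<le> b")
      case le: True
      have "{j\<in>{1..?N}. \<gamma> j \<in> {0+1..0+b}} = ?S" using im by force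
      then have "\<gamma> i = rank_in ?S i"
        using inv_mono_on_eq_rank_in[OF p inc1 _ True] im[OF True] le by simp
      then show ?thesis using True le unfolding shuffle_of_set_def by simp
    next
      case gt: False
      have "{j\<in>{1..?N}. \<gamma> j \<in> {b+1..b+c}} = {1..?N} - ?S" using im by force
      then have "\<gamma> i = b + rank_in ({1..?N} - ?S) i"
        using inv_mono_on_eq_rank_in[OF p inc2 _ True] im[OF True] gt by simp
      then show ?thesis using True gt unfolding shuffle_of_set_def by simp
    qed
  qed
qed

lemma perm_times_permutes:
  assumes \<sigma>: "\<sigma> permutes {1..n}" and \<tau>: "\<tau> permutes {1..m}"
  shows "perm_times n m \<sigma> \<tau> permutes {1..n+m}"
proof (rule permutes_if_inj_on)
  let ?f = "perm_times n m \<sigma> \<tau>"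
  have \<sigma>_in: "\<sigma> i \<in> {1..n}" if "i \<in> {1..n}" for i using permutes_in_image[OF \<sigma>] that by simp
  have \<tau>_in: "\<tau> (i - n) \<in> {1..m}" if "i \<in> {1..n+m}" "\<not> i \<le> n" for i
  proof -
    have "i - n \<in> {1..m}" using that by auto
    then show ?thesis using permutes_in_image[OF \<tau>] by simp
  qed
  have lo: "?f i = \<sigma> i" if "i \<in> {1..n}" for i using that unfolding perm_times_def by simp
  have hi: "?f i = \<tau> (i - n) + n" if "i \<in> {1..n+m}" "\<not> i \<le> n" for i
    using that unfolding perm_times_def by simp
  show "?f ` {1..n+m} \<subseteq> {1..n+m}"
  proof (rule image_subsetI)
    fix i assume i: "i \<in> {1..n+m}"
    show "?f i \<in> {1..n+m}"
    proof (cases "i \<le> n")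
      case True
      then show ?thesis using i lo[of i] \<sigma>_in[of i] by simp
    next
      case False
      then show ?thesis using i hi[OF i] \<tau>_in[OF i] by simp
    qed
  qed
  show "inj_on ?f {1..n+m}"
  proof (rule inj_onI)
    fix i j assume i: "i \<in> {1..n+m}" and j: "j \<in> {1..n+m}" and eq: "?f i = ?f j"
    consider "i \<le> n" "j \<le> n" | "i \<le> n" "\<not> j \<le> n" | "\<not> i \<le> n" "j \<le> n" | "\<not> i \<le> n" "\<not> j \<le> n"
      by blast
    then show "i = j"
    proof cases
      case 1
      then show ?thesis using eq lo i j permutes_inj[OF \<sigma>] by (simp add: inj_eq)
    next
      case 2
      then show ?thesis using eq lo[of i] hi[OF j] \<sigma>_in[of i] \<tau>_in[OF j] i by simp
    next
      case 3
      then show ?thesis using eq lo[of j] hi[OF i] \<sigma>_in[of j] \<tau>_in[OF i] j by simp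
    next
      case 4
      then have "\<tau> (i - n) = \<tau> (j - n)" using eq hi i j by simp
      then show ?thesis using 4 permutes_inj[OF \<tau>] by (simp add: inj_eq)
    qed
  qed
  show "?f x = x" if "x \<notin> {1..n+m}" for x using that unfolding perm_times_def by auto
qed

lemma permutes_fixing_prefix_in_suffix:
  fixes p :: "nat \<Rightarrow> nat"
  assumes p: "p permutes {1..b+e}" and fix_prefix: "\<And>j. j \<in> {1..b} \<Longrightarrow> p j = j"
    and i: "i \<in> {b+1..b+e}"
  shows "p i \<in> {b+1..b+e}"
proof -
  have "i \<in> {1..b+e}" using i by simp
  then have in1: "p i \<in> {1..b+e}" using permutes_in_image[OF p] by blast
  have "\<not> p i \<le> b"
  proof
    assume "p i \<le> b"
    then have "p (p i) = p i" using fix_prefix in1 by simp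
    then have "p i = i" using permutes_inj[OF p] by (simp add: inj_eq)
    with \<open>p i \<le> b\<close> i show False by simp
  qed
  then show ?thesis using in1 by simp
qed

lemma perm_times_id_of_fixes_prefix:
  assumes p: "p permutes {1..b+e}" and fix_prefix: "\<And>j. j \<in> {1..b} \<Longrightarrow> p j = j"
  obtains \<delta> where "\<delta> permutes {1..e}" "perm_times b e id \<delta> = p"
proof
  define \<delta> where "\<delta> = (\<lambda>j. if j \<in> {1..e} then p (j+b) - b else j)"
  have p_shift: "p (j+b) \<in> {b+1..b+e}" if "j \<in> {1..e}" for j
    using permutes_fixing_prefix_in_suffix[OF p fix_prefix] that by simp
  have \<delta>_shift: "\<delta> j + b = p (j+b)" "\<delta> j \<in> {1..e}" if "j \<in> {1..e}" for j
    using p_shift[OF that] that unfolding \<delta>_def by auto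
  show "\<delta> permutes {1..e}"
  proof (rule permutes_if_inj_on)
    show "\<delta> ` {1..e} \<subseteq> {1..e}" using \<delta>_shift(2) by auto
    show "inj_on \<delta> {1..e}"
    proof (rule inj_onI)
      fix x y assume "x \<in> {1..e}" "y \<in> {1..e}" "\<delta> x = \<delta> y"
      then have "p (x+b) = p (y+b)" using \<delta>_shift(1) by metis
      then show "x = y" using permutes_inj[OF p] by (simp add: inj_eq)
    qed
    show "\<delta> x = x" if "x \<notin> {1..e}" for x unfolding \<delta>_def if_not_P[OF that] ..
  qed
  show "perm_times b e id \<delta> = p"
  proof
    fix i
    consider "i \<in> {1..b}" | "i \<in> {b+1..b+e}" | "i \<notin> {1..b+e}" by fastforce
    then show "perm_times b e id \<delta> i = p i"
    proof cases
      case 1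
      then show ?thesis using fix_prefix unfolding perm_times_def by simp
    next
      case 2
      then have "i - b \<in> {1..e}" "i - b + b = i" by auto
      then show ?thesis using 2 \<delta>_shift(1)[of "i - b"] unfolding perm_times_def by auto
    next
      case 3
      then show ?thesis using permutes_not_in[OF p] unfolding perm_times_def by auto
    qed
  qed
qed

lemma inv_mono_on_perm_times_id:
  assumes inc: "inv_mono_on (perm_times b e id \<delta>) (b+e) {b+x+1..b+y}"
    and \<delta>: "\<delta> permutes {1..e}"
  shows "inv_mono_on \<delta> e {x+1..y}"
  unfolding inv_mono_on_def
proof (intro ballI impI)
  fix j j' assume j: "j \<in> {1..e}" "j' \<in> {1..e}" "\<delta> j \<in> {x+1..y}" "\<delta> j' \<in> {x+1..y}" "\<delta> j < \<delta> j'"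
  have shift: "perm_times b e id \<delta> (k+b) = \<delta> k + b" if "k \<in> {1..e}" for k
    using that unfolding perm_times_def by simp
  have "j + b \<in> {1..b+e}" "j' + b \<in> {1..b+e}" using j by auto
  moreover have "perm_times b e id \<delta> (j+b) \<in> {b+x+1..b+y}" "perm_times b e id \<delta> (j'+b) \<in> {b+x+1..b+y}"
    "perm_times b e id \<delta> (j+b) < perm_times b e id \<delta> (j'+b)"
    using j shift by auto
  ultimately have "j + b < j' + b" using inc unfolding inv_mono_on_def by blast
  then show "j < j'" by simp
qed

lemma perm_times_id_of_fixes_prefix_Sh:
  assumes p: "p permutes {1..b+(c+d)}" and fix_prefix: "\<And>j. j \<in> {1..b} \<Longrightarrow> p j = j"
    and inc1: "inv_mono_on p (b+(c+d)) {b+1..b+c}"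
    and inc2: "inv_mono_on p (b+(c+d)) {b+c+1..b+(c+d)}"
  obtains \<delta> where "\<delta> \<in> Sh c d" "perm_times b (c+d) id \<delta> = p"
proof -
  obtain \<delta> where \<delta>: "\<delta> permutes {1..c+d}" and eq: "perm_times b (c+d) id \<delta> = p"
    using perm_times_id_of_fixes_prefix[OF p fix_prefix] by blast
  have "inv_mono_on \<delta> (c+d) {0+1..c}"
    by (rule inv_mono_on_perm_times_id[of b "c+d" \<delta> 0 c, OF _ \<delta>]) (use inc1 eq in simp)
  moreover have "inv_mono_on \<delta> (c+d) {c+1..c+d}"
    by (rule inv_mono_on_perm_times_id[of b "c+d" \<delta> c "c+d", OF _ \<delta>])
      (use inc2 eq in \<open>simp add: add.assoc\<close>)
  ultimately have "\<delta> \<in> Sh c d" unfolding Sh_iff using \<delta> by simp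
  then show ?thesis using eq that by blast
qed

lemma inv_mono_on_perm_times_comp:
  assumes \<sigma>: "\<sigma> \<in> Sh b c" and \<tau>: "\<tau> \<in> Sh (b+c) d"
  defines "\<pi> \<equiv> perm_times (b+c) d \<sigma> id \<circ> \<tau>"
  shows "\<pi> permutes {1..b+c+d}" "inv_mono_on \<pi> (b+c+d) {1..b}"
    "inv_mono_on \<pi> (b+c+d) {b+1..b+c}" "inv_mono_on \<pi> (b+c+d) {b+c+1..b+c+d}"
proof -
  let ?N = "b + c + d" and ?A = "perm_times (b+c) d \<sigma> id"
  have \<sigma>p: "\<sigma> permutes {1..b+c}" and \<sigma>1: "inv_mono_on \<sigma> (b+c) {1..b}"
    and \<sigma>2: "inv_mono_on \<sigma> (b+c) {b+1..b+c}"
    using \<sigma> unfolding Sh_iff by auto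
  have \<tau>p: "\<tau> permutes {1..?N}" and \<tau>1: "inv_mono_on \<tau> ?N {1..b+c}"
    and \<tau>2: "inv_mono_on \<tau> ?N {b+c+1..?N}"
    using \<tau> unfolding Sh_iff by auto
  have "?A permutes {1..?N}" using perm_times_permutes[OF \<sigma>p permutes_id[of "{1..d}"]] by simp
  then show "\<pi> permutes {1..?N}" unfolding \<pi>_def using permutes_compose[OF \<tau>p] by blast
  have \<sigma>_in: "\<sigma> k \<in> {1..b+c}" if "k \<in> {1..b+c}" for k using permutes_in_image[OF \<sigma>p] that by simp
  have \<tau>_in: "\<tau> k \<in> {1..?N}" if "k \<in> {1..?N}" for k using permutes_in_image[OF \<tau>p] that by simp
  have \<pi>_eq: "\<pi> i = (if \<tau> i \<le> b + c then \<sigma> (\<tau> i) else \<tau> i)" if "i \<in> {1..?N}" for i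
    using \<tau>_in[OF that] unfolding \<pi>_def perm_times_def by auto
  have \<pi>_le_iff: "\<pi> i \<le> b + c \<longleftrightarrow> \<tau> i \<le> b + c" if "i \<in> {1..?N}" for i
    using \<pi>_eq[OF that] \<sigma>_in[of "\<tau> i"] \<tau>_in[OF that] by auto
  have \<pi>_lo: "\<tau> i \<in> {1..b+c} \<and> \<pi> i = \<sigma> (\<tau> i)" if "i \<in> {1..?N}" "\<pi> i \<le> b + c" for i
    using \<pi>_eq[OF that(1)] \<pi>_le_iff[OF that(1)] \<tau>_in[OF that(1)] that(2) by auto
  have \<pi>_hi: "\<tau> i \<in> {b+c+1..?N} \<and> \<pi> i = \<tau> i" if "i \<in> {1..?N}" "\<not> \<pi> i \<le> b + c" for i
    using \<pi>_eq[OF that(1)] \<pi>_le_iff[OF that(1)] \<tau>_in[OF that(1)] that(2) by auto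
  have \<pi>_lo_block: "inv_mono_on \<pi> ?N B" if B: "B \<subseteq> {1..b+c}" "inv_mono_on \<sigma> (b+c) B" for B
    unfolding inv_mono_on_def
  proof (intro ballI impI)
    fix i i' assume i: "i \<in> {1..?N}" "i' \<in> {1..?N}" "\<pi> i \<in> B" "\<pi> i' \<in> B" "\<pi> i < \<pi> i'"
    have l: "\<tau> i \<in> {1..b+c} \<and> \<pi> i = \<sigma> (\<tau> i)" "\<tau> i' \<in> {1..b+c} \<and> \<pi> i' = \<sigma> (\<tau> i')"
      using \<pi>_lo[OF i(1)] \<pi>_lo[OF i(2)] i(3,4) B(1) by auto
    moreover have "\<sigma> (\<tau> i) \<in> B" "\<sigma> (\<tau> i') \<in> B" "\<sigma> (\<tau> i) < \<sigma> (\<tau> i')" using l i(3-5) by auto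
    ultimately have "\<tau> i < \<tau> i'" using B(2) unfolding inv_mono_on_def by blast
    then show "i < i'" using \<tau>1 l i(1,2) unfolding inv_mono_on_def by blast
  qed
  show "inv_mono_on \<pi> ?N {1..b}" using \<pi>_lo_block[OF _ \<sigma>1] by auto
  show "inv_mono_on \<pi> ?N {b+1..b+c}" using \<pi>_lo_block[OF _ \<sigma>2] by auto
  show "inv_mono_on \<pi> ?N {b+c+1..?N}" unfolding inv_mono_on_def
  proof (intro ballI impI)
    fix i i' assume i: "i \<in> {1..?N}" "i' \<in> {1..?N}" "\<pi> i \<in> {b+c+1..?N}" "\<pi> i' \<in> {b+c+1..?N}"
      "\<pi> i < \<pi> i'"
    then have "\<tau> i \<in> {b+c+1..?N}" "\<tau> i' \<in> {b+c+1..?N}" "\<tau> i < \<tau> i'"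
      using \<pi>_hi[OF i(1)] \<pi>_hi[OF i(2)] by auto
    then show "i < i'" using \<tau>2 i(1,2) unfolding inv_mono_on_def by blast
  qed
qed

lemma card_preimage_first_block:
  assumes \<pi>: "\<pi> permutes {1..N}" and bN: "b \<le> N"
  shows "card {i\<in>{1..N}. \<pi> i \<le> b} = b"
proof -
  have "\<pi> ` {i\<in>{1..N}. \<pi> i \<le> b} = {1..b}"
  proof (intro equalityI subsetI)
    fix y assume "y \<in> {1..b}"
    then have "inv \<pi> y \<in> {1..N}" "\<pi> (inv \<pi> y) = y" using permutes_inv_mem[OF \<pi>] bN by auto
    then show "y \<in> \<pi> ` {i\<in>{1..N}. \<pi> i \<le> b}" using \<open>y \<in> {1..b}\<close> by force
  qed (use permutes_in_image[OF \<pi>] in auto)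
  then show ?thesis
    using card_image[OF permutes_inj_on[OF \<pi>], of "{i\<in>{1..N}. \<pi> i \<le> b}"] by simp
qed

lemma shuffle_of_set_eq_on_first_block:
  assumes \<pi>: "\<pi> permutes {1..N}" and inc: "inv_mono_on \<pi> N {1..b}" and bN: "b \<le> N"
    and i: "i \<in> {1..N}" "\<pi> i \<le> b"
  shows "shuffle_of_set b N {i\<in>{1..N}. \<pi> i \<le> b} i = \<pi> i"
proof -
  have \<pi>_in: "\<pi> k \<in> {1..N}" if "k \<in> {1..N}" for k using permutes_in_image[OF \<pi>] that by simp
  have "{j\<in>{1..N}. \<pi> j \<in> {0+1..0+b}} = {i\<in>{1..N}. \<pi> i \<le> b}" using \<pi>_in by force
  moreover have "\<pi> i = 0 + rank_in {j\<in>{1..N}. \<pi> j \<in> {0+1..0+b}} i"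
    using inv_mono_on_eq_rank_in[of \<pi> N 0 b i] \<pi> inc bN i \<pi>_in by auto
  ultimately show ?thesis using i unfolding shuffle_of_set_def by auto
qed

lemma split_off_first_block:
  assumes \<pi>: "\<pi> permutes {1..b+e}" and inc: "inv_mono_on \<pi> (b+e) {1..b}"
  obtains g where "g \<in> Sh b e" "\<And>j. j \<in> {1..b} \<Longrightarrow> (\<pi> \<circ> inv g) j = j"
    "\<And>B. B \<subseteq> {b+1..b+e} \<Longrightarrow> inv_mono_on \<pi> (b+e) B \<Longrightarrow> inv_mono_on (\<pi> \<circ> inv g) (b+e) B"
proof
  let ?N = "b + e"
  define S where "S = {i\<in>{1..?N}. \<pi> i \<le> b}"
  have S_sub: "S \<subseteq> {1..?N}" unfolding S_def by auto
  have "card S = b" using card_preimage_first_block[OF \<pi>, of b] unfolding S_def by simp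
  define g where "g = shuffle_of_set b ?N S"
  show g: "g \<in> Sh b e" using shuffle_of_set_in_Sh[OF S_sub \<open>card S = b\<close>] unfolding g_def by simp
  have g_le: "g i \<le> b \<longleftrightarrow> i \<in> S" if "i \<in> {1..?N}" for i
    using shuffle_of_set_le_iff[OF S_sub \<open>card S = b\<close> that] unfolding g_def .
  have gp: "g permutes {1..?N}" and g2: "inv_mono_on g ?N {b+1..?N}" using g unfolding Sh_iff by auto
  have g_on_S: "g i = \<pi> i" if "i \<in> S" for i
    using shuffle_of_set_eq_on_first_block[OF \<pi> inc, of i] that unfolding g_def S_def by simp
  have ig: "inv g j \<in> {1..?N}" "g (inv g j) = j" if "j \<in> {1..?N}" for j
    using permutes_inv_mem[OF gp that] .
  show "(\<pi> \<circ> inv g) j = j" if j: "j \<in> {1..b}" for j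
  proof -
    have jN: "j \<in> {1..?N}" using j by auto
    then have "inv g j \<in> S" using g_le[OF ig(1)[OF jN]] ig(2)[OF jN] j by simp
    then show ?thesis using g_on_S ig(2)[OF jN] by fastforce
  qed
  show "inv_mono_on (\<pi> \<circ> inv g) ?N B" if B: "B \<subseteq> {b+1..?N}" "inv_mono_on \<pi> ?N B" for B
    unfolding inv_mono_on_def
  proof (intro ballI impI)
    fix j j' assume j: "j \<in> {1..?N}" "j' \<in> {1..?N}" "(\<pi> \<circ> inv g) j \<in> B" "(\<pi> \<circ> inv g) j' \<in> B"
      "(\<pi> \<circ> inv g) j < (\<pi> \<circ> inv g) j'"
    let ?i = "inv g j" and ?i' = "inv g j'"
    have "\<pi> ?i \<in> B" "\<pi> ?i' \<in> B" "\<pi> ?i < \<pi> ?i'" using j(3-5) by auto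
    then have "?i < ?i'" using B(2) ig(1) j(1,2) unfolding inv_mono_on_def by blast
    moreover have "?i \<notin> S" "?i' \<notin> S" using j(3,4) B(1) unfolding S_def by auto
    then have "\<not> g ?i \<le> b" "\<not> g ?i' \<le> b" using g_le ig(1) j(1,2) by auto
    moreover have "g ?i \<in> {1..?N}" "g ?i' \<in> {1..?N}" using ig(2) j(1,2) by auto
    ultimately have "g ?i \<in> {b+1..?N}" "g ?i' \<in> {b+1..?N}" "?i < ?i'" by auto
    then have "g ?i < g ?i'"
      using inv_mono_onD[OF gp g2 ig(1)[OF j(1)] ig(1)[OF j(2)]] by blast
    then show "j < j'" using ig(2) j(1,2) by simp
  qed
qed

lemma Sh_reassociate:
  assumes \<sigma>: "\<sigma> \<in> Sh b c" and \<tau>: "\<tau> \<in> Sh (b+c) d"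
  obtains \<gamma> \<delta> where "\<gamma> \<in> Sh b (c+d)" "\<delta> \<in> Sh c d"
    "perm_times b (c+d) id \<delta> \<circ> \<gamma> = perm_times (b+c) d \<sigma> id \<circ> \<tau>"
proof -
  let ?\<pi> = "perm_times (b+c) d \<sigma> id \<circ> \<tau>"
  note \<pi> = inv_mono_on_perm_times_comp[OF \<sigma> \<tau>, unfolded add.assoc[of b c d]]
  obtain \<gamma> where \<gamma>: "\<gamma> \<in> Sh b (c+d)" and fix_prefix: "\<And>j. j \<in> {1..b} \<Longrightarrow> (?\<pi> \<circ> inv \<gamma>) j = j"
    and inc: "\<And>B. B \<subseteq> {b+1..b+(c+d)} \<Longrightarrow> inv_mono_on ?\<pi> (b+(c+d)) B \<Longrightarrow>
                   inv_mono_on (?\<pi> \<circ> inv \<gamma>) (b+(c+d)) B"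
    using split_off_first_block[OF \<pi>(1,2)] by blast
  have \<gamma>p: "\<gamma> permutes {1..b+(c+d)}" using Sh_permutes[OF \<gamma>] .
  have "?\<pi> \<circ> inv \<gamma> permutes {1..b+(c+d)}" using permutes_compose[OF permutes_inv[OF \<gamma>p] \<pi>(1)] .
  moreover have "inv_mono_on (?\<pi> \<circ> inv \<gamma>) (b+(c+d)) {b+1..b+c}"
    "inv_mono_on (?\<pi> \<circ> inv \<gamma>) (b+(c+d)) {b+c+1..b+(c+d)}"
    using inc \<pi>(3,4) by (auto simp: add.assoc)
  ultimately obtain \<delta> where \<delta>: "\<delta> \<in> Sh c d" and eq: "perm_times b (c+d) id \<delta> = ?\<pi> \<circ> inv \<gamma>"
    using perm_times_id_of_fixes_prefix_Sh fix_prefix by blast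
  have "perm_times b (c+d) id \<delta> \<circ> \<gamma> = ?\<pi>"
    unfolding eq using permutes_inverses(2)[OF \<gamma>p] by (simp add: fun_eq_iff)
  then show ?thesis using that \<gamma> \<delta> by blast
qed

section \<open>Words acted on by permutations\<close>

lemma length_pf_act [simp]: "length (pf_act h \<gamma>) = length h"
  unfolding pf_act_def by (simp del: upt_Suc)

lemma nth_pf_act: "i < length h \<Longrightarrow> pf_act h \<gamma> ! i = h ! (\<gamma> (i+1) - 1)"
  unfolding pf_act_def by (simp add: nth_upt del: upt_Suc)

lemma nth_pf_act': "i \<in> {1..length h} \<Longrightarrow> pf_act h \<gamma> ! (i - 1) = h ! (\<gamma> i - 1)"
proof -
  assume "i \<in> {1..length h}"
  then have "i - 1 < length h" "i - 1 + 1 = i" by auto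
  then show ?thesis using nth_pf_act[of "i - 1" h \<gamma>] by simp
qed

lemma pf_act_eqI:
  assumes "length w = length h" "\<And>i. i \<in> {1..length h} \<Longrightarrow> w ! (i - 1) = h ! (\<gamma> i - 1)"
  shows "w = pf_act h \<gamma>"
proof (rule nth_equalityI)
  show "length w = length (pf_act h \<gamma>)" using assms by simp
  fix i assume "i < length w"
  then show "w ! i = pf_act h \<gamma> ! i" using assms(2)[of "i+1"] assms(1) nth_pf_act by simp
qed

lemma mset_pf_act:
  assumes p: "\<gamma> permutes {1..length h}"
  shows "mset (pf_act h \<gamma>) = mset h"
proof -
  let ?n = "length h"
  have "distinct (map \<gamma> [1..<?n+1])" using permutes_inj[OF p]
    by (simp add: distinct_map inj_on_subset[of \<gamma> UNIV] del: upt_Suc)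
  moreover have "set (map \<gamma> [1..<?n+1]) = set [1..<?n+1]"
    using permutes_image[OF p] by (simp add: atLeastLessThanSuc_atLeastAtMost del: upt_Suc)
  ultimately have perm: "mset (map \<gamma> [1..<?n+1]) = mset [1..<?n+1]"
    by (metis distinct_upt set_eq_iff_mset_eq_distinct)
  have "mset (pf_act h \<gamma>) = image_mset (\<lambda>i. h ! (i - 1)) (mset (map \<gamma> [1..<?n+1]))"
    unfolding pf_act_def by (simp only: mset_map[symmetric] map_map o_def)
  also have "\<dots> = mset (map (\<lambda>i. h ! (i - 1)) [1..<?n+1])"
    unfolding perm by simp
  also have "map (\<lambda>i. h ! (i - 1)) [1..<?n+1] = h"
    by (rule nth_equalityI) (auto simp: nth_upt simp del: upt_Suc)
  finally show ?thesis .
qed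

lemma pf_act_comp:
  assumes p: "\<beta> permutes {1..length w}"
  shows "pf_act (pf_act w \<alpha>) \<beta> = pf_act w (\<alpha> \<circ> \<beta>)"
proof (rule nth_equalityI)
  fix i assume i: "i < length (pf_act (pf_act w \<alpha>) \<beta>)"
  then have "\<beta> (i+1) \<in> {1..length w}" using permutes_in_image[OF p] by simp
  then show "pf_act (pf_act w \<alpha>) \<beta> ! i = pf_act w (\<alpha> \<circ> \<beta>) ! i"
    using i nth_pf_act'[of "\<beta> (i+1)" w \<alpha>] by (simp add: nth_pf_act)
qed simp

lemma length_pf_times [simp]: "length (pf_times n f g) = length f + length g"
  unfolding pf_times_def by simp

lemma nth_pf_times_lo: "i < length f \<Longrightarrow> pf_times n f g ! i = f ! i"
  unfolding pf_times_def by (simp add: nth_append)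

lemma nth_pf_times_hi:
  "length f \<le> i \<Longrightarrow> i < length f + length g \<Longrightarrow> pf_times n f g ! i = g ! (i - length f) + n"
  unfolding pf_times_def by (simp add: nth_append)

lemma pf_times_assoc:
  "length f = n \<Longrightarrow> pf_times n f (pf_times m g k) = pf_times (n+m) (pf_times n f g) k"
  unfolding pf_times_def by (simp add: add.assoc o_def)

lemma pf_times_pf_act_right:
  assumes f: "length f = n" and w: "length w = m" and p: "\<delta> permutes {1..m}"
  shows "pf_times n f (pf_act w \<delta>) = pf_act (pf_times n f w) (perm_times n m id \<delta>)"
proof (rule pf_act_eqI)
  fix i assume i: "i \<in> {1..length (pf_times n f w)}"
  show "pf_times n f (pf_act w \<delta>) ! (i - 1) = pf_times n f w ! (perm_times n m id \<delta> i - 1)"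
  proof (cases "i \<le> n")
    case True
    then show ?thesis using i f unfolding perm_times_def by (simp add: nth_pf_times_lo)
  next
    case False
    then have i_n: "i - n \<in> {1..m}" "i - 1 - n = i - n - 1" using i f w by auto
    then have "\<delta> (i - n) \<in> {1..m}" using permutes_in_image[OF p] by simp
    then have "length f \<le> \<delta> (i - n) + n - 1" "\<delta> (i - n) + n - 1 < length f + length w"
      "\<delta> (i - n) + n - 1 - length f = \<delta> (i - n) - 1" using f w by auto
    then have "pf_times n f w ! (\<delta> (i - n) + n - 1) = w ! (\<delta> (i - n) - 1) + n"
      using nth_pf_times_hi by metis
    moreover have "pf_times n f (pf_act w \<delta>) ! (i - 1) = w ! (\<delta> (i - n) - 1) + n"
      using False i f w i_n nth_pf_act'[of "i - n" w \<delta>] by (simp add: nth_pf_times_hi)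
    ultimately show ?thesis using False i f w unfolding perm_times_def by simp
  qed
qed simp

lemma pf_times_pf_act_left:
  assumes f: "length f = n" and g: "length g = m" and p: "\<alpha> permutes {1..n}"
  shows "pf_times n (pf_act f \<alpha>) g = pf_act (pf_times n f g) (perm_times n m \<alpha> id)"
proof (rule pf_act_eqI)
  fix i assume i: "i \<in> {1..length (pf_times n f g)}"
  show "pf_times n (pf_act f \<alpha>) g ! (i - 1) = pf_times n f g ! (perm_times n m \<alpha> id i - 1)"
  proof (cases "i \<le> n")
    case True
    then have "\<alpha> i \<in> {1..n}" using permutes_in_image[OF p] i by simp
    then have "\<alpha> i - 1 < length f" using f by auto
    then show ?thesis using True i f nth_pf_act'[of i f \<alpha>] unfolding perm_times_def
      by (simp add: nth_pf_times_lo)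
  next
    case False
    then show ?thesis using i f g unfolding perm_times_def by (simp add: nth_pf_times_hi)
  qed
qed simp

lemma pf_act_pf_times_assoc:
  assumes lf: "length f = n" and lg: "length g = m" and lk: "length k = r"
    and \<gamma>: "\<gamma> \<in> Sh n (m + r)" and \<delta>: "\<delta> \<in> Sh m r" and \<sigma>: "\<sigma> \<in> Sh n m" and \<tau>: "\<tau> \<in> Sh (n + m) r"
    and eq: "perm_times n (m + r) id \<delta> \<circ> \<gamma> = perm_times (n + m) r \<sigma> id \<circ> \<tau>"
  shows "pf_act (pf_times n f (pf_act (pf_times m g k) \<delta>)) \<gamma>
       = pf_act (pf_times (n + m) (pf_act (pf_times n f g) \<sigma>) k) \<tau>"
proof -
  have \<gamma>p: "\<gamma> permutes {1..length (pf_times n f (pf_times m g k))}"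
    using Sh_permutes[OF \<gamma>] lf lg lk by (simp add: add.assoc)
  have \<tau>p: "\<tau> permutes {1..length (pf_times (n+m) (pf_times n f g) k)}"
    using Sh_permutes[OF \<tau>] lf lg lk by simp
  have "pf_act (pf_times n f (pf_act (pf_times m g k) \<delta>)) \<gamma>
      = pf_act (pf_act (pf_times n f (pf_times m g k)) (perm_times n (m + r) id \<delta>)) \<gamma>"
    using pf_times_pf_act_right[OF lf _ Sh_permutes[OF \<delta>], of "pf_times m g k"] lg lk by simp
  also have "\<dots> = pf_act (pf_times n f (pf_times m g k)) (perm_times n (m + r) id \<delta> \<circ> \<gamma>)"
    by (rule pf_act_comp[OF \<gamma>p])
  also have "\<dots> = pf_act (pf_times (n+m) (pf_times n f g) k) (perm_times (n + m) r \<sigma> id \<circ> \<tau>)"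
    unfolding eq pf_times_assoc[OF lf] ..
  also have "\<dots> = pf_act (pf_act (pf_times (n+m) (pf_times n f g) k) (perm_times (n + m) r \<sigma> id)) \<tau>"
    by (rule pf_act_comp[OF \<tau>p, symmetric])
  also have "\<dots> = pf_act (pf_times (n + m) (pf_act (pf_times n f g) \<sigma>) k) \<tau>"
    using pf_times_pf_act_left[of "pf_times n f g" "n+m" k r \<sigma>] lf lg lk Sh_permutes[OF \<sigma>] by simp
  finally show ?thesis .
qed

section \<open>Parking functions and breakpoints\<close>

definition count_le :: "nat list \<Rightarrow> nat \<Rightarrow> nat" where
  "count_le f b = length (filter (\<lambda>x. x \<le> b) f)"

lemma card_positions_eq_length_filter:
  assumes "length f = n"
  shows "card {i\<in>{1..n}. P (f ! (i - 1))} = length (filter P f)"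
proof -
  have "{i\<in>{1..n}. P (f ! (i - 1))} = Suc ` {i. i < length f \<and> P (f ! i)}"
  proof (rule set_eqI)
    fix x
    show "x \<in> {i\<in>{1..n}. P (f ! (i - 1))} \<longleftrightarrow> x \<in> Suc ` {i. i < length f \<and> P (f ! i)}"
      using assms by (cases x) auto
  qed
  then show ?thesis by (simp add: card_image length_filter_conv_card)
qed

lemma is_breakpoint_iff: "length f = n \<Longrightarrow> is_breakpoint n f b \<longleftrightarrow> b \<le> n \<and> count_le f b = b"
  unfolding is_breakpoint_def count_le_def
  using card_positions_eq_length_filter[of f n "\<lambda>x. x \<le> b"] by simp

lemma count_le_mset_cong: "mset f = mset g \<Longrightarrow> count_le f b = count_le g b"
  unfolding count_le_def by (metis mset_filter size_mset)

lemma count_le_le_length: "count_le f b \<le> length f"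
  unfolding count_le_def by simp

lemma count_le_pf_times:
  assumes "b' \<le> b" "0 \<notin> set h"
  shows "count_le (pf_times b l h) b' = count_le l b'"
proof -
  have "b' < x + b" if "x \<in> set h" for x
  proof -
    have "x \<noteq> 0" using that assms(2) by metis
    then show ?thesis using assms(1) by simp
  qed
  then have "filter (\<lambda>x. x \<le> b') (map (\<lambda>x. x + b) h) = []"
    by (simp add: filter_empty_conv not_le)
  then show ?thesis unfolding count_le_def pf_times_def by simp
qed

lemma count_le_eq_length: "set l \<subseteq> {..b} \<Longrightarrow> count_le l b = length l"
  unfolding count_le_def by (subst filter_True) auto

lemma PF_length: "f \<in> PF n \<Longrightarrow> length f = n"
  unfolding PF_def is_pf_def by simp

lemma PF_set: "f \<in> PF n \<Longrightarrow> set f \<subseteq> {1..n}"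
  unfolding PF_def is_pf_def by simp

lemma finite_PF: "finite (PF n)"
proof (rule finite_subset)
  show "PF n \<subseteq> {xs. set xs \<subseteq> {1..n} \<and> length xs = n}" unfolding PF_def is_pf_def by auto
qed (rule finite_lists_length_eq, simp)

lemma PF_mset_cong:
  assumes "mset f = mset g"
  shows "f \<in> PF n \<longleftrightarrow> g \<in> PF n"
proof -
  have "sort f = sort g" using assms by (metis sorted_list_of_multiset_mset)
  then show ?thesis using mset_eq_length[OF assms] mset_eq_setD[OF assms]
    unfolding PF_def is_pf_def by simp
qed

lemma pf_act_in_PF:
  assumes "f \<in> PF n" "\<gamma> permutes {1..n}"
  shows "pf_act f \<gamma> \<in> PF n"
  using mset_pf_act[of \<gamma> f] PF_mset_cong assms PF_length by metis

lemma sort_pf_times: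
  assumes "set l \<subseteq> {..b}"
  shows "sort (pf_times b l h) = pf_times b (sort l) (sort h)"
  unfolding pf_times_def
proof (rule properties_for_sort)
  have "sorted (map (\<lambda>x. x + b) (sort h))" by (simp add: sorted_map)
  then show "sorted (sort l @ map (\<lambda>x. x + b) (sort h))"
    using assms by (auto simp: sorted_append)
qed simp

lemma pf_times_in_PF:
  assumes f: "f \<in> PF n" and g: "g \<in> PF m"
  shows "pf_times n f g \<in> PF (n + m)"
proof -
  have lf: "length f = n" and sf: "set f \<subseteq> {1..n}" and of: "\<forall>i<n. sort f ! i \<le> i + 1"
    using f unfolding PF_def is_pf_def by auto
  have lg: "length g = m" and sg: "set g \<subseteq> {1..m}" and og: "\<forall>i<m. sort g ! i \<le> i + 1"
    using g unfolding PF_def is_pf_def by auto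
  have "set f \<subseteq> {..n}" using sf by auto
  then have srt: "sort (pf_times n f g) = sort f @ map (\<lambda>x. x + n) (sort g)"
    using sort_pf_times[of f n g] unfolding pf_times_def by simp
  have "sort (pf_times n f g) ! i \<le> i + 1" if i: "i < n + m" for i
  proof (cases "i < n")
    case True
    then show ?thesis using of lf unfolding srt by (simp add: nth_append)
  next
    case False
    then have "sort g ! (i - n) \<le> i - n + 1" using og i by simp
    then show ?thesis using False lf lg i unfolding srt by (simp add: nth_append)
  qed
  moreover have "set (pf_times n f g) \<subseteq> {1..n+m}" using sf sg unfolding pf_times_def by auto
  ultimately show ?thesis using lf lg unfolding PF_def is_pf_def by simp
qed

lemma pf_act_pf_times_in_PF:
  "f \<in> PF n \<Longrightarrow> g \<in> PF m \<Longrightarrow> \<gamma> \<in> Sh n m \<Longrightarrow> pf_act (pf_times n f g) \<gamma> \<in> PF (n+m)"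
  using pf_act_in_PF[OF pf_times_in_PF Sh_permutes] by blast

lemma PF_factors_of_mset_eq:
  assumes w: "w \<in> PF n" and ms: "mset w = mset (pf_times b l h)" and ll: "length l = b"
    and lh: "length h = n - b" and bn: "b \<le> n" and sl: "set l \<subseteq> {..b}" and sh: "0 \<notin> set h"
  shows "l \<in> PF b" and "h \<in> PF (n - b)"
proof -
  have sw: "set w \<subseteq> {1..n}" and ow: "\<forall>i<n. sort w ! i \<le> i + 1"
    using w unfolding PF_def is_pf_def by auto
  have srt: "sort w = sort l @ map (\<lambda>x. x + b) (sort h)"
    using ms sort_pf_times[OF sl, of h] unfolding pf_times_def
    by (metis sorted_list_of_multiset_mset)
  have setw: "set w = set l \<union> (\<lambda>x. x + b) ` set h"
    using mset_eq_setD[OF ms] unfolding pf_times_def by simp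
  have "sort l ! i \<le> i + 1" if "i < b" for i
    using that ow[rule_format, of i] bn ll unfolding srt by (simp add: nth_append)
  moreover have "set l \<subseteq> {1..b}"
  proof
    fix x assume "x \<in> set l"
    then have "x \<in> set w" "x \<le> b" using setw sl by auto
    then show "x \<in> {1..b}" using sw by auto
  qed
  ultimately show "l \<in> PF b" using ll unfolding PF_def is_pf_def by simp
  have "sort h ! i \<le> i + 1" if "i < n - b" for i
    using that ow[rule_format, of "b + i"] ll lh unfolding srt by (simp add: nth_append)
  moreover have "set h \<subseteq> {1..n-b}"
  proof
    fix x assume x: "x \<in> set h"
    then have "x + b \<le> n" using setw sw by auto
    moreover have "x \<noteq> 0" using x sh by metis
    ultimately show "x \<in> {1..n-b}" by auto
  qed
  ultimately show "h \<in> PF (n - b)" using lh unfolding PF_def is_pf_def by simp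
qed

lemma nth_pf_times':
  assumes "length l = b" "length r = m" "k \<in> {1..b+m}"
  shows "pf_times b l r ! (k - 1) = (if k \<le> b then l ! (k - 1) else r ! (k - b - 1) + b)"
  using assms by (auto simp: nth_pf_times_lo nth_pf_times_hi)

text \<open>Cutting a word at \<open>b\<close>: the letters \<open>\<le> b\<close> form the low word, the others (lowered
  by \<open>b\<close>) the high word, and the split shuffle records their positions.\<close>

definition split_shuffle :: "nat \<Rightarrow> nat list \<Rightarrow> nat \<Rightarrow> nat" where
  "split_shuffle b f = shuffle_of_set b (length f) {i\<in>{1..length f}. f ! (i - 1) \<le> b}"

definition low_word :: "nat \<Rightarrow> nat list \<Rightarrow> nat list" where
  "low_word b f = map (\<lambda>j. f ! (inv (split_shuffle b f) j - 1)) [1..<b+1]"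

definition high_word :: "nat \<Rightarrow> nat list \<Rightarrow> nat list" where
  "high_word b f = map (\<lambda>j. f ! (inv (split_shuffle b f) (j + b) - 1) - b) [1..<length f - b + 1]"

lemma length_low_word [simp]: "length (low_word b f) = b"
  unfolding low_word_def by (simp del: upt_Suc)

lemma length_high_word [simp]: "length (high_word b f) = length f - b"
  unfolding high_word_def by (simp del: upt_Suc)

lemma nth_low_word:
  assumes "j \<in> {1..b}"
  shows "low_word b f ! (j - 1) = f ! (inv (split_shuffle b f) j - 1)"
proof -
  have "j - 1 < b" using assms by auto
  then have "j - 1 < length [1..<b+1]" "[1..<b+1] ! (j - 1) = j"
    using assms by (simp_all add: nth_upt del: upt_Suc)
  then show ?thesis unfolding low_word_def by (simp del: upt_Suc)
qed

lemma nth_high_word: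
  assumes "j \<in> {1..length f - b}"
  shows "high_word b f ! (j - 1) = f ! (inv (split_shuffle b f) (j + b) - 1) - b"
proof -
  have "j - 1 < length f - b" using assms by auto
  then have "j - 1 < length [1..<length f - b + 1]" "[1..<length f - b + 1] ! (j - 1) = j"
    using assms by (simp_all add: nth_upt del: upt_Suc)
  then show ?thesis unfolding high_word_def by (simp del: upt_Suc)
qed

context
  fixes f :: "nat list" and b :: nat
  assumes breakpoint: "count_le f b = b"
begin

private lemma card_low_positions: "card {i\<in>{1..length f}. f ! (i - 1) \<le> b} = b"
  using card_positions_eq_length_filter[of f "length f" "\<lambda>x. x \<le> b"] breakpoint
  unfolding count_le_def by simp

lemma split_shuffle_in_Sh: "split_shuffle b f \<in> Sh b (length f - b)"
  unfolding split_shuffle_def by (rule shuffle_of_set_in_Sh[OF _ card_low_positions]) auto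

lemma split_shuffle_le_iff:
  assumes "i \<in> {1..length f}"
  shows "split_shuffle b f i \<le> b \<longleftrightarrow> f ! (i - 1) \<le> b"
proof -
  have "{i\<in>{1..length f}. f ! (i - 1) \<le> b} \<subseteq> {1..length f}" by auto
  from shuffle_of_set_le_iff[OF this card_low_positions assms] assms show ?thesis
    unfolding split_shuffle_def by simp
qed

private lemma split_shuffle_permutes: "split_shuffle b f permutes {1..length f}"
  using Sh_permutes[OF split_shuffle_in_Sh] count_le_le_length[of f b] breakpoint by simp

lemma set_low_word: "set (low_word b f) \<subseteq> {..b}"
proof
  fix x assume "x \<in> set (low_word b f)"
  then obtain k where k: "k < b" "x = low_word b f ! k" by (auto simp: in_set_conv_nth)
  let ?j = "inv (split_shuffle b f) (k + 1)"
  have "k + 1 \<in> {1..length f}" using k count_le_le_length[of f b] breakpoint by auto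
  then have "?j \<in> {1..length f}" "split_shuffle b f ?j \<le> b"
    using permutes_inv_mem[OF split_shuffle_permutes] k by auto
  then have "f ! (?j - 1) \<le> b" using split_shuffle_le_iff by blast
  moreover have "x = f ! (?j - 1)" using nth_low_word[of "k + 1" b f] k by simp
  ultimately show "x \<in> {..b}" by simp
qed

lemma zero_notin_high_word: "0 \<notin> set (high_word b f)"
proof
  assume "0 \<in> set (high_word b f)"
  then obtain k where k: "k < length f - b" "high_word b f ! k = 0" by (auto simp: in_set_conv_nth)
  let ?j = "inv (split_shuffle b f) (k + 1 + b)"
  have "k + 1 + b \<in> {1..length f}" using k by auto
  then have "?j \<in> {1..length f}" "\<not> split_shuffle b f ?j \<le> b"
    using permutes_inv_mem[OF split_shuffle_permutes] by auto
  then have "b < f ! (?j - 1)" using split_shuffle_le_iff by auto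
  moreover have "f ! (?j - 1) - b = 0" using nth_high_word[of "k + 1" f b] k by simp
  ultimately show False by simp
qed

lemma pf_act_low_high_word:
  "pf_act (pf_times b (low_word b f) (high_word b f)) (split_shuffle b f) = f"
proof (rule pf_act_eqI[symmetric])
  let ?\<gamma> = "split_shuffle b f"
  have bn: "b \<le> length f" using count_le_le_length[of f b] breakpoint by simp
  show "length f = length (pf_times b (low_word b f) (high_word b f))" using bn by simp
  fix i assume "i \<in> {1..length (pf_times b (low_word b f) (high_word b f))}"
  then have i: "i \<in> {1..length f}" using bn by simp
  have \<gamma>i: "?\<gamma> i \<in> {1..length f}" "inv ?\<gamma> (?\<gamma> i) = i"
    using permutes_in_image[OF split_shuffle_permutes] i
      permutes_inverses(2)[OF split_shuffle_permutes] by blast+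
  have nth: "pf_times b (low_word b f) (high_word b f) ! (?\<gamma> i - 1) =
      (if ?\<gamma> i \<le> b then low_word b f ! (?\<gamma> i - 1) else high_word b f ! (?\<gamma> i - b - 1) + b)"
    using nth_pf_times'[of "low_word b f" b "high_word b f" "length f - b" "?\<gamma> i"] \<gamma>i bn by simp
  show "f ! (i - 1) = pf_times b (low_word b f) (high_word b f) ! (?\<gamma> i - 1)"
  proof (cases "?\<gamma> i \<le> b")
    case True
    then show ?thesis using nth nth_low_word[of "?\<gamma> i" b f] \<gamma>i by simp
  next
    case False
    then have "b < f ! (i - 1)" "?\<gamma> i - b \<in> {1..length f - b}" "?\<gamma> i - b + b = ?\<gamma> i"
      using split_shuffle_le_iff[OF i] \<gamma>i by auto
    then show ?thesis using False nth nth_high_word[of "?\<gamma> i - b" f b] \<gamma>i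
      by (simp add: diff_diff_add)
  qed
qed

end

lemma split_pf_act_pf_times:
  assumes l: "length l = b" "set l \<subseteq> {..b}" and r: "0 \<notin> set r" and \<gamma>: "\<gamma> \<in> Sh b (length r)"
    and h: "h = pf_act (pf_times b l r) \<gamma>"
  shows "split_shuffle b h = \<gamma>" "low_word b h = l" "high_word b h = r"
proof -
  let ?m = "length r"
  have \<gamma>p: "\<gamma> permutes {1..b+?m}" using Sh_permutes[OF \<gamma>] .
  have lh: "length h = b + ?m" using h l by simp
  have \<gamma>_in: "\<gamma> i \<in> {1..b+?m}" if "i \<in> {1..b+?m}" for i using permutes_in_image[OF \<gamma>p] that by simp
  have h_nth: "h ! (i - 1) = (if \<gamma> i \<le> b then l ! (\<gamma> i - 1) else r ! (\<gamma> i - b - 1) + b)"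
    if "i \<in> {1..b+?m}" for i
    using nth_pf_act'[of i "pf_times b l r" \<gamma>] nth_pf_times'[OF l(1) refl \<gamma>_in[OF that]] that h l
    by simp
  have "h ! (i - 1) \<le> b \<longleftrightarrow> \<gamma> i \<le> b" if i: "i \<in> {1..b+?m}" for i
  proof (cases "\<gamma> i \<le> b")
    case True
    then have "l ! (\<gamma> i - 1) \<in> set l" using \<gamma>_in[OF i] l(1) by (intro nth_mem) auto
    then show ?thesis using h_nth[OF i] True l(2) by auto
  next
    case False
    then have "r ! (\<gamma> i - b - 1) \<in> set r" using \<gamma>_in[OF i] by (intro nth_mem) auto
    then have "r ! (\<gamma> i - b - 1) \<noteq> 0" using r by metis
    then show ?thesis using h_nth[OF i] False by auto
  qed
  then have "{i\<in>{1..length h}. h ! (i - 1) \<le> b} = {i\<in>{1..b+?m}. \<gamma> i \<le> b}" using lh by auto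
  then show sh: "split_shuffle b h = \<gamma>"
    unfolding split_shuffle_def lh using Sh_eq_shuffle_of_set[OF \<gamma>] by simp
  have inv\<gamma>: "inv \<gamma> j \<in> {1..b+?m}" "\<gamma> (inv \<gamma> j) = j" if "j \<in> {1..b+?m}" for j
    using permutes_inv_mem[OF \<gamma>p that] .
  show "low_word b h = l"
  proof (rule nth_equalityI)
    fix k assume "k < length (low_word b h)"
    then have k: "k + 1 \<in> {1..b}" "k + 1 \<in> {1..b+?m}" by auto
    then show "low_word b h ! k = l ! k"
      using nth_low_word[OF k(1), of h] h_nth[OF inv\<gamma>(1)] inv\<gamma>(2) unfolding sh by simp
  qed (simp add: l)
  show "high_word b h = r"
  proof (rule nth_equalityI)
    fix k assume "k < length (high_word b h)"
    then have k: "k + 1 \<in> {1..length h - b}" "k + 1 + b \<in> {1..b+?m}" using lh by auto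
    then show "high_word b h ! k = r ! k"
      using nth_high_word[OF k(1)] h_nth[OF inv\<gamma>(1)] inv\<gamma>(2) unfolding sh by simp
  qed (simp add: lh)
qed

definition first_breakpoint :: "nat list \<Rightarrow> nat" where
  "first_breakpoint f = (LEAST b. 0 < b \<and> count_le f b = b)"

lemma first_breakpoint:
  assumes f: "f \<in> PF n" and n: "1 \<le> n"
  shows "0 < first_breakpoint f" "count_le f (first_breakpoint f) = first_breakpoint f"
    "first_breakpoint f \<le> n" "\<And>b. 0 < b \<Longrightarrow> b < first_breakpoint f \<Longrightarrow> count_le f b \<noteq> b"
proof -
  have "set f \<subseteq> {..n}" using PF_set[OF f] by auto
  then have "count_le f n = n" using count_le_eq_length[of f n] PF_length[OF f] by simp
  then have ex: "0 < n \<and> count_le f n = n" using n by simp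
  show "0 < first_breakpoint f" "count_le f (first_breakpoint f) = first_breakpoint f"
    using LeastI[of "\<lambda>b. 0 < b \<and> count_le f b = b", OF ex] unfolding first_breakpoint_def by auto
  show "first_breakpoint f \<le> n"
    using Least_le[of "\<lambda>b. 0 < b \<and> count_le f b = b", OF ex] unfolding first_breakpoint_def .
  show "count_le f b \<noteq> b" if "0 < b" "b < first_breakpoint f" for b
    using not_less_Least[of b "\<lambda>b. 0 < b \<and> count_le f b = b"] that
    unfolding first_breakpoint_def by auto
qed

lemma PPF_iff: "f \<in> PPF n \<longleftrightarrow> f \<in> PF n \<and> 1 \<le> n \<and> first_breakpoint f = n"
proof
  assume f: "f \<in> PPF n"
  then have pf: "f \<in> PF n" and n: "1 \<le> n"
    and prime: "\<And>b. is_breakpoint n f b \<Longrightarrow> b = 0 \<or> b = n"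
    unfolding PPF_def PF_def by auto
  have "is_breakpoint n f (first_breakpoint f)"
    unfolding is_breakpoint_iff[OF PF_length[OF pf]] using first_breakpoint(2,3)[OF pf n] by simp
  then have "first_breakpoint f = 0 \<or> first_breakpoint f = n" by (rule prime)
  then show "f \<in> PF n \<and> 1 \<le> n \<and> first_breakpoint f = n"
    using first_breakpoint(1)[OF pf n] pf n by auto
next
  assume f: "f \<in> PF n \<and> 1 \<le> n \<and> first_breakpoint f = n"
  have "b = 0 \<or> b = n" if "is_breakpoint n f b" for b
  proof -
    have "length f = n" using f PF_length by blast
    from that[unfolded is_breakpoint_iff[OF this]] have "b \<le> n" "count_le f b = b" by auto
    then show ?thesis using first_breakpoint(4)[of f n b] f by linarith
  qed
  then show "f \<in> PPF n" using f unfolding PPF_def PF_def by auto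
qed

lemma PF_first_breakpoint_factorisation:
  assumes f: "f \<in> PF n" and n: "1 \<le> n" and lt: "first_breakpoint f < n"
  defines "b \<equiv> first_breakpoint f"
  shows "split_shuffle b f \<in> Sh b (n - b)" "low_word b f \<in> PPF b" "high_word b f \<in> PF (n - b)"
    "f = pf_act (pf_times b (low_word b f) (high_word b f)) (split_shuffle b f)"
proof -
  have lf: "length f = n" using PF_length[OF f] .
  have bp: "count_le f b = b" "0 < b" using first_breakpoint[OF f n] unfolding b_def by auto
  show sh: "split_shuffle b f \<in> Sh b (n - b)" using split_shuffle_in_Sh[OF bp(1)] lf by simp
  show fe: "f = pf_act (pf_times b (low_word b f) (high_word b f)) (split_shuffle b f)"
    using pf_act_low_high_word[OF bp(1)] by simp
  have "split_shuffle b f permutes {1..length (pf_times b (low_word b f) (high_word b f))}"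
    using Sh_permutes[OF sh] lt lf unfolding b_def by simp
  then have ms: "mset f = mset (pf_times b (low_word b f) (high_word b f))"
    using mset_pf_act fe by metis
  note factors = PF_factors_of_mset_eq[OF f ms _ _ _ set_low_word[OF bp(1)] zero_notin_high_word[OF bp(1)]]
  show "high_word b f \<in> PF (n - b)" using factors(2) lf lt unfolding b_def by simp
  have "b' = 0 \<or> b' = b" if "is_breakpoint b (low_word b f) b'" for b'
  proof -
    have b': "b' \<le> b" "count_le (low_word b f) b' = b'"
      using that unfolding is_breakpoint_iff[OF length_low_word] by auto
    have "count_le f b' = b'"
      using count_le_mset_cong[OF ms] count_le_pf_times[OF b'(1) zero_notin_high_word[OF bp(1)]] b'
      by simp
    then show ?thesis using first_breakpoint(4)[OF f n, of b'] b' unfolding b_def by linarith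
  qed
  then show "low_word b f \<in> PPF b"
    using factors(1) lf lt bp(2) unfolding b_def PPF_def PF_def by auto
qed

lemma first_breakpoint_pf_act_pf_times:
  assumes p: "p \<in> PPF b" and r: "r \<in> PF m" and \<gamma>: "\<gamma> \<in> Sh b m"
  shows "first_breakpoint (pf_act (pf_times b p r) \<gamma>) = b"
  unfolding first_breakpoint_def
proof (rule Least_equality)
  let ?h = "pf_act (pf_times b p r) \<gamma>"
  have pf: "p \<in> PF b" and b: "1 \<le> b" and bp: "first_breakpoint p = b" using p unfolding PPF_iff by auto
  have r0: "0 \<notin> set r" using PF_set[OF r] by auto
  have "mset ?h = mset (pf_times b p r)"
    using mset_pf_act Sh_permutes[OF \<gamma>] PF_length[OF pf] PF_length[OF r] by simp
  then have count: "count_le ?h b' = count_le p b'" if "b' \<le> b" for b'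
    using count_le_mset_cong count_le_pf_times[OF that r0] by metis
  have "set p \<subseteq> {..b}" using PF_set[OF pf] by auto
  then show "0 < b \<and> count_le ?h b = b"
    using b count[of b] count_le_eq_length[of p b] PF_length[OF pf] by simp
  show "b \<le> b'" if "0 < b' \<and> count_le ?h b' = b'" for b'
    using that count[of b'] first_breakpoint(4)[OF pf b, of b'] bp by force
qed

section \<open>PQSym is a shuffle algebra\<close>

lemma PQ_vector_space: "vector_space (PQ_scale :: 'k::field \<Rightarrow> _)"
  unfolding vector_space_def PQ_scale_def by (auto simp: fun_eq_iff algebra_simps)

lemma PQ_module: "module (PQ_scale :: 'k::field \<Rightarrow> _)"
  using PQ_vector_space module_iff_vector_space by blast

lemma PQ_subspace: "module.subspace (PQ_scale :: 'k::field \<Rightarrow> _) (PQ_V n)"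
  unfolding module.subspace_def[OF PQ_module]
proof (intro conjI ballI allI)
  fix x y :: "nat list \<Rightarrow> 'k" assume "x \<in> PQ_V n" "y \<in> PQ_V n"
  moreover have "x w \<noteq> 0 \<or> y w \<noteq> 0" if "(x + y) w \<noteq> 0" for w using that by auto
  ultimately show "x + y \<in> PQ_V n" unfolding PQ_V_def by blast
qed (auto simp: PQ_V_def PQ_scale_def)

lemma PQ_mult_eq:
  "PQ_mult n m \<gamma> x y h =
     (\<Sum>f\<in>PF n. \<Sum>g\<in>PF m. if pf_act (pf_times n f g) \<gamma> = h then x f * y g else 0)"
  unfolding PQ_mult_def sum.cartesian_product by (simp add: case_prod_beta)

lemma PQ_mult_add_left: "PQ_mult n m \<gamma> (x + x') y = PQ_mult n m \<gamma> x y + PQ_mult n m \<gamma> x' y"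
  unfolding PQ_mult_def by (auto simp: fun_eq_iff sum.distrib[symmetric] algebra_simps intro!: sum.cong)

lemma PQ_mult_add_right: "PQ_mult n m \<gamma> x (y + y') = PQ_mult n m \<gamma> x y + PQ_mult n m \<gamma> x y'"
  unfolding PQ_mult_def by (auto simp: fun_eq_iff sum.distrib[symmetric] algebra_simps intro!: sum.cong)

lemma PQ_mult_scale_left: "PQ_mult n m \<gamma> (PQ_scale c x) y = PQ_scale c (PQ_mult n m \<gamma> x y)"
  unfolding PQ_mult_def PQ_scale_def
  by (auto simp: fun_eq_iff sum_distrib_left algebra_simps intro!: sum.cong)

lemma PQ_mult_scale_right: "PQ_mult n m \<gamma> x (PQ_scale c y) = PQ_scale c (PQ_mult n m \<gamma> x y)"
  unfolding PQ_mult_def PQ_scale_def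
  by (auto simp: fun_eq_iff sum_distrib_left algebra_simps intro!: sum.cong)

lemma PQ_mult_closed:
  assumes x: "x \<in> PQ_V n" and y: "y \<in> PQ_V m" and \<gamma>: "\<gamma> \<in> Sh n m"
  shows "PQ_mult n m \<gamma> x y \<in> PQ_V (n + m)"
  unfolding PQ_V_def mem_Collect_eq
proof (intro allI impI)
  fix h assume "PQ_mult n m \<gamma> x y h \<noteq> 0"
  then obtain f g where fg: "f \<in> PF n" "g \<in> PF m" "pf_act (pf_times n f g) \<gamma> = h" "x f \<noteq> 0"
    unfolding PQ_mult_eq by (auto elim!: sum.not_neutral_contains_not_neutral split: if_splits)
  then have "1 \<le> n" using x unfolding PQ_V_def by auto
  then show "1 \<le> n + m \<and> h \<in> PF (n + m)" using pf_act_pf_times_in_PF[OF fg(1,2) \<gamma>] fg(3) by simp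
qed

lemma sum_collapse_fibres:
  fixes v :: "'a \<Rightarrow> 'k::comm_ring_1"
  assumes U: "finite U" and A: "finite A" and c: "\<And>a. a \<in> A \<Longrightarrow> c a \<in> U"
  shows "(\<Sum>u\<in>U. if P u then w * (\<Sum>a\<in>A. if c a = u then v a else 0) else 0)
       = (\<Sum>a\<in>A. if P (c a) then w * v a else 0)"
proof -
  have "(if P u then w * (\<Sum>a\<in>A. if c a = u then v a else 0) else 0)
      = (\<Sum>a\<in>A. if c a = u then (if P u then w * v a else 0) else 0)" for u
    by (cases "P u") (simp_all add: sum_distrib_left if_distrib cong: if_cong)
  then have "(\<Sum>u\<in>U. if P u then w * (\<Sum>a\<in>A. if c a = u then v a else 0) else 0)
      = (\<Sum>u\<in>U. \<Sum>a\<in>A. if c a = u then (if P u then w * v a else 0) else 0)"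
    by simp
  also have "\<dots> = (\<Sum>a\<in>A. \<Sum>u\<in>U. if c a = u then (if P u then w * v a else 0) else 0)"
    by (rule sum.swap)
  also have "\<dots> = (\<Sum>a\<in>A. if P (c a) then w * v a else 0)"
    using c U by (intro sum.cong) (auto simp: sum.delta)
  finally show ?thesis .
qed

lemma PQ_mult_right_nested:
  assumes \<delta>: "\<delta> \<in> Sh m r"
  shows "PQ_mult n (m + r) \<gamma> x (PQ_mult m r \<delta> y z) h
       = (\<Sum>f\<in>PF n. \<Sum>g\<in>PF m. \<Sum>k\<in>PF r.
            if pf_act (pf_times n f (pf_act (pf_times m g k) \<delta>)) \<gamma> = h
            then x f * y g * (z k :: 'k::field) else 0)"
proof -
  have "PQ_mult n (m + r) \<gamma> x (PQ_mult m r \<delta> y z) h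
      = (\<Sum>f\<in>PF n. \<Sum>u\<in>PF (m+r). if pf_act (pf_times n f u) \<gamma> = h then x f *
           (\<Sum>p\<in>PF m \<times> PF r. if pf_act (pf_times m (fst p) (snd p)) \<delta> = u
                               then y (fst p) * z (snd p) else 0) else 0)"
    unfolding PQ_mult_eq[of n "m+r"] PQ_mult_def[of m r] ..
  also have "\<dots> = (\<Sum>f\<in>PF n. \<Sum>p\<in>PF m \<times> PF r.
      if pf_act (pf_times n f (pf_act (pf_times m (fst p) (snd p)) \<delta>)) \<gamma> = h
      then x f * (y (fst p) * z (snd p)) else 0)"
    by (intro sum.cong refl sum_collapse_fibres)
      (auto simp: finite_PF intro: pf_act_pf_times_in_PF[OF _ _ \<delta>])
  finally show ?thesis
    by (simp add: sum.cartesian_product case_prod_beta mult.assoc cong: if_cong)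
qed

lemma PQ_mult_left_nested:
  assumes \<sigma>: "\<sigma> \<in> Sh n m"
  shows "PQ_mult (n + m) r \<tau> (PQ_mult n m \<sigma> x y) z h
       = (\<Sum>f\<in>PF n. \<Sum>g\<in>PF m. \<Sum>k\<in>PF r.
            if pf_act (pf_times (n + m) (pf_act (pf_times n f g) \<sigma>) k) \<tau> = h
            then x f * y g * (z k :: 'k::field) else 0)"
proof -
  have "PQ_mult (n + m) r \<tau> (PQ_mult n m \<sigma> x y) z h
      = (\<Sum>k\<in>PF r. \<Sum>u\<in>PF (n+m). if pf_act (pf_times (n+m) u k) \<tau> = h then z k *
           (\<Sum>p\<in>PF n \<times> PF m. if pf_act (pf_times n (fst p) (snd p)) \<sigma> = u
                               then x (fst p) * y (snd p) else 0) else 0)"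
    unfolding PQ_mult_eq[of "n+m" r] PQ_mult_def[of n m]
    by (subst sum.swap) (simp add: mult.commute cong: if_cong)
  also have "\<dots> = (\<Sum>k\<in>PF r. \<Sum>p\<in>PF n \<times> PF m.
      if pf_act (pf_times (n + m) (pf_act (pf_times n (fst p) (snd p)) \<sigma>) k) \<tau> = h
      then z k * (x (fst p) * y (snd p)) else 0)"
    by (intro sum.cong refl sum_collapse_fibres)
      (auto simp: finite_PF intro: pf_act_pf_times_in_PF[OF _ _ \<sigma>])
  also have "\<dots> = (\<Sum>k\<in>PF r. \<Sum>f\<in>PF n. \<Sum>g\<in>PF m.
      if pf_act (pf_times (n + m) (pf_act (pf_times n f g) \<sigma>) k) \<tau> = h
      then x f * y g * z k else 0)"
    by (simp add: sum.cartesian_product case_prod_beta mult_ac cong: if_cong)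
  also have "\<dots> = (\<Sum>f\<in>PF n. \<Sum>g\<in>PF m. \<Sum>k\<in>PF r.
      if pf_act (pf_times (n + m) (pf_act (pf_times n f g) \<sigma>) k) \<tau> = h
      then x f * y g * z k else 0)"
    by (subst sum.swap) (subst sum.swap, rule refl)
  finally show ?thesis .
qed

lemma PQ_mult_assoc:
  assumes \<gamma>: "\<gamma> \<in> Sh n (m + r)" and \<delta>: "\<delta> \<in> Sh m r" and \<sigma>: "\<sigma> \<in> Sh n m"
    and \<tau>: "\<tau> \<in> Sh (n + m) r"
    and eq: "perm_times n (m + r) id \<delta> \<circ> \<gamma> = perm_times (n + m) r \<sigma> id \<circ> \<tau>"
  shows "PQ_mult n (m + r) \<gamma> x (PQ_mult m r \<delta> y z)
       = PQ_mult (n + m) r \<tau> (PQ_mult n m \<sigma> x y) (z :: nat list \<Rightarrow> 'k::field)"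
proof
  fix h
  have word_eq: "pf_act (pf_times n f (pf_act (pf_times m g k) \<delta>)) \<gamma>
      = pf_act (pf_times (n + m) (pf_act (pf_times n f g) \<sigma>) k) \<tau>"
    if "f \<in> PF n" "g \<in> PF m" "k \<in> PF r" for f g k
    using pf_act_pf_times_assoc[OF PF_length PF_length PF_length \<gamma> \<delta> \<sigma> \<tau> eq] that by blast
  show "PQ_mult n (m + r) \<gamma> x (PQ_mult m r \<delta> y z) h = PQ_mult (n + m) r \<tau> (PQ_mult n m \<sigma> x y) z h"
    unfolding PQ_mult_right_nested[OF \<delta>] PQ_mult_left_nested[OF \<sigma>]
    by (intro sum.cong refl) (simp only: word_eq)
qed

lemma PQ_shuffle_alg: "shuffle_alg (PQ_scale :: 'k::field \<Rightarrow> _) PQ_V PQ_mult"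
  unfolding shuffle_alg_def
proof (intro conjI allI impI ballI PQ_vector_space PQ_subspace)
  fix n m \<gamma> and x y :: "nat list \<Rightarrow> 'k"
  assume "\<gamma> \<in> Sh n m" "x \<in> PQ_V n" "y \<in> PQ_V m"
  then show "PQ_mult n m \<gamma> x y \<in> PQ_V (n + m)" by (intro PQ_mult_closed)
next
  fix n m \<gamma> and x y :: "nat list \<Rightarrow> 'k"
  show "lin_on PQ_scale PQ_scale (PQ_V n) (\<lambda>x. PQ_mult n m \<gamma> x y)"
    "lin_on PQ_scale PQ_scale (PQ_V m) (\<lambda>y. PQ_mult n m \<gamma> x y)"
    unfolding lin_on_def
    by (simp_all add: PQ_mult_add_left PQ_mult_scale_left PQ_mult_add_right PQ_mult_scale_right)
next
  fix n m r \<gamma> \<delta> \<sigma> \<tau> and x y z :: "nat list \<Rightarrow> 'k"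
  assume "\<gamma> \<in> Sh n (m + r) \<and> \<delta> \<in> Sh m r \<and> \<sigma> \<in> Sh n m \<and> \<tau> \<in> Sh (n + m) r \<and>
       perm_times n (m + r) id \<delta> \<circ> \<gamma> = perm_times (n + m) r \<sigma> id \<circ> \<tau>"
  then show "PQ_mult n (m + r) \<gamma> x (PQ_mult m r \<delta> y z) = PQ_mult (n + m) r \<tau> (PQ_mult n m \<sigma> x y) z"
    using PQ_mult_assoc by blast
qed

section \<open>Freeness\<close>

lemma lin_on_zero:
  assumes "module sc1" "module sc2" "module.subspace sc1 S" "lin_on sc1 sc2 S F"
  shows "F 0 = 0"
proof -
  have "F 0 = F (sc1 0 0)" using module.scale_zero_left[OF assms(1)] by simp
  also have "\<dots> = sc2 0 (F 0)" using assms(4) module.subspace_0[OF assms(1,3)] unfolding lin_on_def by blast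
  also have "\<dots> = 0" using module.scale_zero_left[OF assms(2)] .
  finally show ?thesis .
qed

lemma lin_on_sum:
  assumes m1: "module sc1" and m2: "module sc2" and S: "module.subspace sc1 S"
    and F: "lin_on sc1 sc2 S F" and A: "finite A" and u: "\<And>a. a \<in> A \<Longrightarrow> u a \<in> S"
  shows "F (\<Sum>a\<in>A. u a) = (\<Sum>a\<in>A. F (u a))"
  using A u
proof (induction A rule: finite_induct)
  case empty
  then show ?case using lin_on_zero[OF m1 m2 S F] by simp
next
  case (insert a A)
  then have "(\<Sum>a\<in>A. u a) \<in> S" using module.subspace_sum[OF m1 S] by blast
  then show ?case using F insert unfolding lin_on_def by simp
qed

locale shuffle_algebra =
  fixes sc :: "'k::field \<Rightarrow> 'a::ab_group_add \<Rightarrow> 'a" and V :: "nat \<Rightarrow> 'a set"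
    and mu :: "nat \<Rightarrow> nat \<Rightarrow> (nat \<Rightarrow> nat) \<Rightarrow> 'a \<Rightarrow> 'a \<Rightarrow> 'a"
  assumes shuffle_alg: "shuffle_alg sc V mu"
begin

lemma module: "module sc"
  using shuffle_alg unfolding shuffle_alg_def module_iff_vector_space by simp

lemma subspace: "module.subspace sc (V n)"
  using shuffle_alg unfolding shuffle_alg_def by simp

lemma mult_closed: "\<gamma> \<in> Sh n m \<Longrightarrow> x \<in> V n \<Longrightarrow> y \<in> V m \<Longrightarrow> mu n m \<gamma> x y \<in> V (n + m)"
  using shuffle_alg unfolding shuffle_alg_def by blast

lemma mult_linear_left: "\<gamma> \<in> Sh n m \<Longrightarrow> y \<in> V m \<Longrightarrow> lin_on sc sc (V n) (\<lambda>x. mu n m \<gamma> x y)"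
  using shuffle_alg unfolding shuffle_alg_def by blast

lemma mult_linear_right: "\<gamma> \<in> Sh n m \<Longrightarrow> x \<in> V n \<Longrightarrow> lin_on sc sc (V m) (\<lambda>y. mu n m \<gamma> x y)"
  using shuffle_alg unfolding shuffle_alg_def by blast

lemma mult_assoc:
  "\<gamma> \<in> Sh n (m + r) \<Longrightarrow> \<delta> \<in> Sh m r \<Longrightarrow> \<sigma> \<in> Sh n m \<Longrightarrow> \<tau> \<in> Sh (n + m) r \<Longrightarrow>
   perm_times n (m + r) id \<delta> \<circ> \<gamma> = perm_times (n + m) r \<sigma> id \<circ> \<tau> \<Longrightarrow>
   x \<in> V n \<Longrightarrow> y \<in> V m \<Longrightarrow> z \<in> V r \<Longrightarrow>
   mu n (m + r) \<gamma> x (mu m r \<delta> y z) = mu (n + m) r \<tau> (mu n m \<sigma> x y) z"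
  using shuffle_alg unfolding shuffle_alg_def by blast

lemma mult_zero_left: "\<gamma> \<in> Sh n m \<Longrightarrow> y \<in> V m \<Longrightarrow> mu n m \<gamma> 0 y = 0"
  using lin_on_zero[OF module module subspace mult_linear_left] by blast

lemma mult_zero_right: "\<gamma> \<in> Sh n m \<Longrightarrow> x \<in> V n \<Longrightarrow> mu n m \<gamma> x 0 = 0"
  using lin_on_zero[OF module module subspace mult_linear_right] by blast

lemma mult_sum:
  assumes \<gamma>: "\<gamma> \<in> Sh n m" and A: "finite A" "\<And>a. a \<in> A \<Longrightarrow> u a \<in> V n"
    and B: "finite B" "\<And>b. b \<in> B \<Longrightarrow> v b \<in> V m"
  shows "mu n m \<gamma> (\<Sum>a\<in>A. u a) (\<Sum>b\<in>B. v b) = (\<Sum>a\<in>A. \<Sum>b\<in>B. mu n m \<gamma> (u a) (v b))"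
proof -
  have "(\<Sum>b\<in>B. v b) \<in> V m" using module.subspace_sum[OF module subspace] B by blast
  then have "mu n m \<gamma> (\<Sum>a\<in>A. u a) (\<Sum>b\<in>B. v b) = (\<Sum>a\<in>A. mu n m \<gamma> (u a) (\<Sum>b\<in>B. v b))"
    using lin_on_sum[OF module module subspace mult_linear_left[OF \<gamma>] A] by simp
  also have "\<dots> = (\<Sum>a\<in>A. \<Sum>b\<in>B. mu n m \<gamma> (u a) (v b))"
    using lin_on_sum[OF module module subspace mult_linear_right[OF \<gamma> A(2)] B] by simp
  finally show ?thesis .
qed

lemma scale_if_zero: "sc (if c then a else 0) v = (if c then sc a v else 0)"
  using module.scale_zero_left[OF module] by simp

lemma scale_scale: "sc a (sc b v) = sc (a * b) v"
  using module.scale_scale[OF module] .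

lemma mult_scale:
  assumes "\<gamma> \<in> Sh n m" "x \<in> V n" "y \<in> V m"
  shows "mu n m \<gamma> (sc a x) (sc b y) = sc (a * b) (mu n m \<gamma> x y)"
proof -
  have "sc b y \<in> V m" using module.subspace_scale[OF module subspace] assms(3) .
  then have "mu n m \<gamma> (sc a x) (sc b y) = sc a (mu n m \<gamma> x (sc b y))"
    using mult_linear_left[OF assms(1)] assms(2) unfolding lin_on_def by blast
  also have "mu n m \<gamma> x (sc b y) = sc b (mu n m \<gamma> x y)"
    using mult_linear_right[OF assms(1,2)] assms(3) unfolding lin_on_def by blast
  finally show ?thesis by (simp add: scale_scale)
qed

end

lemma sum_apply: "(\<Sum>a\<in>A. F a) w = (\<Sum>a\<in>A. (F a w :: 'b::comm_monoid_add))"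
  by (induction A rule: infinite_finite_induct) auto

lemma PQ_basis_in_PQ_V: "f \<in> PF n \<Longrightarrow> 1 \<le> n \<Longrightarrow> PQ_basis n f \<in> PQ_V n"
  unfolding PQ_basis_def PQ_V_def by auto

lemma PQ_mult_PQ_basis:
  assumes f: "f \<in> PF n" and g: "g \<in> PF m"
  shows "PQ_mult n m \<gamma> (PQ_basis n f) (PQ_basis m g)
       = (PQ_basis (n+m) (pf_act (pf_times n f g) \<gamma>) :: _ \<Rightarrow> 'k::field)"
proof
  fix h
  have "(PQ_mult n m \<gamma> (PQ_basis n f) (PQ_basis m g) h :: 'k)
     = (\<Sum>f'\<in>PF n. if f' = f then (\<Sum>g'\<in>PF m. if g' = g then
          (if pf_act (pf_times n f' g') \<gamma> = h then 1 else 0) else 0) else 0)"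
    unfolding PQ_mult_eq PQ_basis_def by (intro sum.cong refl) (auto intro!: sum.cong sum.neutral)
  also have "\<dots> = PQ_basis (n+m) (pf_act (pf_times n f g) \<gamma>) h"
    using f g by (simp add: sum.delta finite_PF PQ_basis_def)
  finally show "PQ_mult n m \<gamma> (PQ_basis n f) (PQ_basis m g) h
      = (PQ_basis (n+m) (pf_act (pf_times n f g) \<gamma>) h :: 'k)" .
qed

lemma PQ_V_basis_expansion:
  assumes x: "x \<in> PQ_V n"
  shows "x = (\<Sum>f\<in>PF n. PQ_scale (x f) (PQ_basis n f :: _ \<Rightarrow> 'k::field))"
proof
  fix w
  have "(\<Sum>f\<in>PF n. PQ_scale (x f) (PQ_basis n f :: _ \<Rightarrow> 'k)) w = (\<Sum>f\<in>PF n. if f = w then x w else 0)"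
    unfolding PQ_scale_def PQ_basis_def sum_apply by (intro sum.cong refl) auto
  also have "\<dots> = x w" using x unfolding PQ_V_def by (auto simp: sum.delta finite_PF)
  finally show "x w = (\<Sum>f\<in>PF n. PQ_scale (x f) (PQ_basis n f :: _ \<Rightarrow> 'k)) w" by simp
qed

text \<open>The value on the basis element of \<open>f\<close> of the morphism extending \<open>phi\<close>. The two junk
  branches only occur for words that are not parking functions of positive size.\<close>

context
  fixes mu :: "nat \<Rightarrow> nat \<Rightarrow> (nat \<Rightarrow> nat) \<Rightarrow> 'b \<Rightarrow> 'b \<Rightarrow> 'b::ab_group_add"
    and phi :: "nat \<Rightarrow> nat list \<Rightarrow> 'b"
begin

function basis_image :: "nat list \<Rightarrow> 'b" where
  "basis_image f =
     (if f = [] \<or> first_breakpoint f = 0 then 0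
      else if first_breakpoint f = length f then phi (length f) f
      else mu (first_breakpoint f) (length f - first_breakpoint f)
             (split_shuffle (first_breakpoint f) f)
             (phi (first_breakpoint f) (low_word (first_breakpoint f) f))
             (basis_image (high_word (first_breakpoint f) f)))"
  by auto
termination by (relation "measure length") auto

end

declare basis_image.simps [simp del]

locale shuffle_target = shuffle_algebra sc V mu
  for sc :: "'k::field \<Rightarrow> 'b::ab_group_add \<Rightarrow> 'b" and V and mu +
  fixes phi :: "nat \<Rightarrow> nat list \<Rightarrow> 'b"
  assumes phi_in_V: "\<And>n g. g \<in> PPF n \<Longrightarrow> phi n g \<in> V n"
begin

abbreviation "\<beta> \<equiv> basis_image mu phi"

lemma basis_image_PPF: "f \<in> PPF n \<Longrightarrow> \<beta> f = phi n f"
  unfolding PPF_iff by (subst basis_image.simps) (auto dest: PF_length)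

lemma basis_image_factorisation:
  assumes f: "f \<in> PF n" and n: "1 \<le> n" and lt: "first_breakpoint f < n"
  defines "b \<equiv> first_breakpoint f"
  shows "\<beta> f = mu b (n - b) (split_shuffle b f) (phi b (low_word b f)) (\<beta> (high_word b f))"
  using first_breakpoint(1)[OF f n] PF_length[OF f] n lt unfolding b_def
  by (subst basis_image.simps) auto

lemma basis_image_prime_times:
  assumes p: "p \<in> PPF b" and r: "r \<in> PF m" and m: "1 \<le> m" and \<gamma>: "\<gamma> \<in> Sh b m"
  shows "\<beta> (pf_act (pf_times b p r) \<gamma>) = mu b m \<gamma> (phi b p) (\<beta> r)"
proof -
  let ?h = "pf_act (pf_times b p r) \<gamma>"
  have pf: "p \<in> PF b" using p unfolding PPF_iff by simp
  have bp: "first_breakpoint ?h = b" using first_breakpoint_pf_act_pf_times[OF p r \<gamma>] .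
  have "set p \<subseteq> {..b}" "0 \<notin> set r" "\<gamma> \<in> Sh b (length r)"
    using PF_set[OF pf] PF_set[OF r] PF_length[OF r] \<gamma> by auto
  note split = split_pf_act_pf_times[OF PF_length[OF pf] this refl]
  have "?h \<in> PF (b + m)" using pf_act_pf_times_in_PF[OF pf r \<gamma>] .
  then show ?thesis using basis_image_factorisation[of ?h "b + m"] bp split m by simp
qed

lemma basis_image_in_V: "f \<in> PF n \<Longrightarrow> 1 \<le> n \<Longrightarrow> \<beta> f \<in> V n"
proof (induction n arbitrary: f rule: less_induct)
  case (less n)
  show ?case
  proof (cases "first_breakpoint f = n")
    case True
    then have "f \<in> PPF n" using less.prems unfolding PPF_iff by simp
    then show ?thesis using basis_image_PPF phi_in_V by simp
  next
    case False
    let ?b = "first_breakpoint f"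
    have lt: "?b < n" and b0: "0 < ?b" using False first_breakpoint[OF less.prems] by auto
    note factors = PF_first_breakpoint_factorisation[OF less.prems lt]
    have "\<beta> (high_word ?b f) \<in> V (n - ?b)" using less.IH[OF _ factors(3)] b0 lt by simp
    then have "mu ?b (n - ?b) (split_shuffle ?b f) (phi ?b (low_word ?b f)) (\<beta> (high_word ?b f))
        \<in> V (?b + (n - ?b))"
      using mult_closed[OF factors(1) phi_in_V[OF factors(2)]] by simp
    then show ?thesis using basis_image_factorisation[OF less.prems lt] lt by simp
  qed
qed

text \<open>Peel off the prime factor of the left argument, reassociate the shuffles with
  \<open>Sh_reassociate\<close>, and use associativity in the target.\<close>

lemma basis_image_mult:
  "f \<in> PF n \<Longrightarrow> g \<in> PF m \<Longrightarrow> 1 \<le> n \<Longrightarrow> 1 \<le> m \<Longrightarrow> \<gamma> \<in> Sh n m \<Longrightarrow>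
   \<beta> (pf_act (pf_times n f g) \<gamma>) = mu n m \<gamma> (\<beta> f) (\<beta> g)"
proof (induction n arbitrary: f g m \<gamma> rule: less_induct)
  case (less n)
  note f = less.prems(1) and g = less.prems(2) and n = less.prems(3) and m = less.prems(4)
    and \<gamma> = less.prems(5)
  show ?case
  proof (cases "first_breakpoint f = n")
    case True
    then have "f \<in> PPF n" using f n unfolding PPF_iff by simp
    then show ?thesis using basis_image_prime_times[OF _ g m \<gamma>] basis_image_PPF by simp
  next
    case False
    let ?b = "first_breakpoint f" let ?c = "n - first_breakpoint f"
    let ?p = "low_word ?b f" and ?r = "high_word ?b f" and ?\<sigma> = "split_shuffle ?b f"
    have lt: "?b < n" and b0: "0 < ?b" using False first_breakpoint[OF f n] by auto
    note factors = PF_first_breakpoint_factorisation[OF f n lt]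
    have nbc: "n = ?b + ?c" and c1: "1 \<le> ?c" using lt by auto
    then have \<gamma>': "\<gamma> \<in> Sh (?b + ?c) m" using \<gamma> by simp
    obtain \<gamma>' \<delta> where \<gamma>'': "\<gamma>' \<in> Sh ?b (?c + m)" and \<delta>: "\<delta> \<in> Sh ?c m"
      and eq: "perm_times ?b (?c + m) id \<delta> \<circ> \<gamma>' = perm_times (?b + ?c) m ?\<sigma> id \<circ> \<gamma>"
      using Sh_reassociate[OF factors(1) \<gamma>'] by blast
    have pf_p: "?p \<in> PF ?b" using factors(2) unfolding PPF_iff by simp
    have "pf_act (pf_times n f g) \<gamma> = pf_act (pf_times ?b ?p (pf_act (pf_times ?c ?r g) \<delta>)) \<gamma>'"
      using pf_act_pf_times_assoc[OF PF_length[OF pf_p] PF_length[OF factors(3)] PF_length[OF g]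
          \<gamma>'' \<delta> factors(1) \<gamma>' eq] factors(4) nbc by simp
    then have "\<beta> (pf_act (pf_times n f g) \<gamma>)
        = mu ?b (?c + m) \<gamma>' (phi ?b ?p) (mu ?c m \<delta> (\<beta> ?r) (\<beta> g))"
      using basis_image_prime_times[OF factors(2) pf_act_pf_times_in_PF[OF factors(3) g \<delta>] _ \<gamma>'']
        less.IH[OF _ factors(3) g c1 m \<delta>] b0 lt m by simp
    also have "\<dots> = mu (?b + ?c) m \<gamma> (mu ?b ?c ?\<sigma> (phi ?b ?p) (\<beta> ?r)) (\<beta> g)"
      by (rule mult_assoc[OF \<gamma>'' \<delta> factors(1) \<gamma>' eq phi_in_V[OF factors(2)]
            basis_image_in_V[OF factors(3) c1] basis_image_in_V[OF g m]])
    also have "mu ?b ?c ?\<sigma> (phi ?b ?p) (\<beta> ?r) = \<beta> f"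
      using basis_image_factorisation[OF f n lt] by simp
    finally show ?thesis using nbc by simp
  qed
qed

end

context shuffle_target
begin

definition extension :: "nat \<Rightarrow> (nat list \<Rightarrow> 'k) \<Rightarrow> 'b" where
  "extension n x = (\<Sum>f\<in>PF n. sc (x f) (\<beta> f))"

lemma scale_basis_image_in_V: "x \<in> PQ_V n \<Longrightarrow> f \<in> PF n \<Longrightarrow> sc (x f) (\<beta> f) \<in> V n"
proof (cases "x f = 0")
  case True
  then show ?thesis using module.scale_zero_left[OF module] module.subspace_0[OF module subspace]
    by simp
next
  case False
  assume "x \<in> PQ_V n" "f \<in> PF n"
  then have "1 \<le> n" using False unfolding PQ_V_def by blast
  then show ?thesis using module.subspace_scale[OF module subspace basis_image_in_V[OF \<open>f \<in> PF n\<close>]]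
    by simp
qed

lemma extension_in_V: "x \<in> PQ_V n \<Longrightarrow> extension n x \<in> V n"
  unfolding extension_def
  by (rule module.subspace_sum[OF module subspace], rule scale_basis_image_in_V)

lemma extension_linear: "lin_on PQ_scale sc (PQ_V n) (extension n)"
  unfolding lin_on_def extension_def PQ_scale_def
  by (simp add: module.scale_left_distrib[OF module] sum.distrib module.scale_sum_right[OF module]
      scale_scale)

lemma extension_PQ_basis: "f \<in> PF n \<Longrightarrow> extension n (PQ_basis n f) = \<beta> f"
  unfolding extension_def PQ_basis_def
  by (simp add: scale_if_zero module.scale_one[OF module] sum.delta finite_PF)

lemma extension_mult:
  assumes \<gamma>: "\<gamma> \<in> Sh n m" and x: "x \<in> PQ_V n" and y: "y \<in> PQ_V m"
  shows "extension (n + m) (PQ_mult n m \<gamma> x y) = mu n m \<gamma> (extension n x) (extension m y)"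
proof -
  let ?h = "\<lambda>f g. pf_act (pf_times n f g) \<gamma>"
  have "extension (n + m) (PQ_mult n m \<gamma> x y)
      = (\<Sum>h\<in>PF (n+m). \<Sum>f\<in>PF n. \<Sum>g\<in>PF m. if ?h f g = h then sc (x f * y g) (\<beta> h) else 0)"
    unfolding extension_def PQ_mult_eq by (simp add: module.scale_sum_left[OF module] scale_if_zero)
  also have "\<dots> = (\<Sum>f\<in>PF n. \<Sum>g\<in>PF m. \<Sum>h\<in>PF (n+m). if ?h f g = h then sc (x f * y g) (\<beta> h) else 0)"
    by (subst sum.swap) (rule sum.cong[OF refl], rule sum.swap)
  also have "\<dots> = (\<Sum>f\<in>PF n. \<Sum>g\<in>PF m. sc (x f * y g) (\<beta> (?h f g)))"
    using pf_act_pf_times_in_PF[OF _ _ \<gamma>] by (intro sum.cong refl) (simp add: sum.delta finite_PF)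
  also have "\<dots> = (\<Sum>f\<in>PF n. \<Sum>g\<in>PF m. mu n m \<gamma> (sc (x f) (\<beta> f)) (sc (y g) (\<beta> g)))"
  proof (intro sum.cong refl)
    fix f g assume f: "f \<in> PF n" and g: "g \<in> PF m"
    show "sc (x f * y g) (\<beta> (?h f g)) = mu n m \<gamma> (sc (x f) (\<beta> f)) (sc (y g) (\<beta> g))"
    proof (cases "x f = 0 \<or> y g = 0")
      case True
      then show ?thesis
        using mult_zero_left[OF \<gamma> scale_basis_image_in_V[OF y g]]
          mult_zero_right[OF \<gamma> scale_basis_image_in_V[OF x f]] module.scale_zero_left[OF module]
        by auto
    next
      case False
      then have "1 \<le> n" "1 \<le> m" using x y unfolding PQ_V_def by blast+
      then show ?thesis
        using mult_scale[OF \<gamma> basis_image_in_V[OF f] basis_image_in_V[OF g]]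
          basis_image_mult[OF f g _ _ \<gamma>] by simp
    qed
  qed
  also have "\<dots> = mu n m \<gamma> (extension n x) (extension m y)"
    unfolding extension_def
    by (rule mult_sum[symmetric, OF \<gamma> finite_PF _ finite_PF]) (use scale_basis_image_in_V x y in auto)
  finally show ?thesis .
qed

lemma extension_hom: "shuffle_hom PQ_scale PQ_V PQ_mult sc V mu extension"
  unfolding shuffle_hom_def using extension_in_V extension_linear extension_mult by blast

lemma hom_PQ_basis_eq_basis_image:
  assumes \<Psi>: "shuffle_hom PQ_scale PQ_V PQ_mult sc V mu \<Psi>"
    and on_primes: "\<And>n g. g \<in> PPF n \<Longrightarrow> \<Psi> n (PQ_basis n g) = phi n g"
  shows "f \<in> PF n \<Longrightarrow> 1 \<le> n \<Longrightarrow> \<Psi> n (PQ_basis n f) = \<beta> f"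
proof (induction n arbitrary: f rule: less_induct)
  case (less n)
  show ?case
  proof (cases "first_breakpoint f = n")
    case True
    then have "f \<in> PPF n" using less.prems unfolding PPF_iff by simp
    then show ?thesis using on_primes basis_image_PPF by simp
  next
    case False
    let ?b = "first_breakpoint f" let ?c = "n - first_breakpoint f"
    have lt: "?b < n" and b0: "0 < ?b" using False first_breakpoint[OF less.prems] by auto
    note factors = PF_first_breakpoint_factorisation[OF less.prems lt]
    have pf_low: "low_word ?b f \<in> PF ?b" using factors(2) unfolding PPF_iff by simp
    have nbc: "n = ?b + ?c" using lt by simp
    have mult: "\<And>n m \<gamma> x y. \<gamma> \<in> Sh n m \<Longrightarrow> x \<in> PQ_V n \<Longrightarrow> y \<in> PQ_V m \<Longrightarrow>
        \<Psi> (n + m) (PQ_mult n m \<gamma> x y) = mu n m \<gamma> (\<Psi> n x) (\<Psi> m y)"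
      using \<Psi> unfolding shuffle_hom_def by blast
    have "PQ_basis n f = (PQ_basis (?b + ?c)
        (pf_act (pf_times ?b (low_word ?b f) (high_word ?b f)) (split_shuffle ?b f)) :: _ \<Rightarrow> 'k)"
      using factors(4) nbc by simp
    also have "\<dots> = PQ_mult ?b ?c (split_shuffle ?b f) (PQ_basis ?b (low_word ?b f))
        (PQ_basis ?c (high_word ?b f))"
      by (rule PQ_mult_PQ_basis[OF pf_low factors(3), symmetric])
    finally have "\<Psi> n (PQ_basis n f)
        = mu ?b ?c (split_shuffle ?b f) (\<Psi> ?b (PQ_basis ?b (low_word ?b f)))
            (\<Psi> ?c (PQ_basis ?c (high_word ?b f)))"
      using mult[OF factors(1) PQ_basis_in_PQ_V[OF pf_low] PQ_basis_in_PQ_V[OF factors(3)]] nbc b0 lt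
      by simp
    also have "\<dots> = \<beta> f"
      using on_primes[OF factors(2)] less.IH[OF _ factors(3)] b0 lt
        basis_image_factorisation[OF less.prems lt] by simp
    finally show ?thesis .
  qed
qed

lemma hom_eq_extension:
  assumes \<Psi>: "shuffle_hom PQ_scale PQ_V PQ_mult sc V mu \<Psi>"
    and on_primes: "\<And>n g. g \<in> PPF n \<Longrightarrow> \<Psi> n (PQ_basis n g) = phi n g"
    and x: "x \<in> PQ_V n"
  shows "\<Psi> n x = extension n x"
proof -
  have lin: "lin_on PQ_scale sc (PQ_V n) (\<Psi> n)" using \<Psi> unfolding shuffle_hom_def by blast
  have term_in: "PQ_scale (x f) (PQ_basis n f) \<in> PQ_V n" for f
    using x unfolding PQ_V_def PQ_scale_def PQ_basis_def by auto
  have "\<Psi> n x = \<Psi> n (\<Sum>f\<in>PF n. PQ_scale (x f) (PQ_basis n f))"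
    using PQ_V_basis_expansion[OF x] by (rule arg_cong)
  also have "\<dots> = (\<Sum>f\<in>PF n. \<Psi> n (PQ_scale (x f) (PQ_basis n f)))"
    by (rule lin_on_sum[OF PQ_module module PQ_subspace lin finite_PF term_in])
  also have "\<dots> = extension n x"
    unfolding extension_def
  proof (intro sum.cong refl)
    fix f assume f: "f \<in> PF n"
    show "\<Psi> n (PQ_scale (x f) (PQ_basis n f)) = sc (x f) (\<beta> f)"
    proof (cases "x f = 0")
      case True
      then have "PQ_scale (x f) (PQ_basis n f) = 0" unfolding PQ_scale_def by auto
      then show ?thesis
        using True lin_on_zero[OF PQ_module module PQ_subspace lin] module.scale_zero_left[OF module]
        by simp
    next
      case False
      then have "1 \<le> n" using x unfolding PQ_V_def by blast
      then have "\<Psi> n (PQ_scale (x f) (PQ_basis n f)) = sc (x f) (\<Psi> n (PQ_basis n f))"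
        using lin PQ_basis_in_PQ_V[OF f] unfolding lin_on_def by blast
      then show ?thesis using hom_PQ_basis_eq_basis_image[OF \<Psi> on_primes f \<open>1 \<le> n\<close>] by simp
    qed
  qed
  finally show ?thesis .
qed

lemma universal_property:
  "\<exists>\<Phi>. shuffle_hom PQ_scale PQ_V PQ_mult sc V mu \<Phi> \<and>
        (\<forall>n. \<forall>g\<in>PPF n. \<Phi> n (PQ_basis n g) = phi n g) \<and>
        (\<forall>\<Psi>. shuffle_hom PQ_scale PQ_V PQ_mult sc V mu \<Psi> \<and>
              (\<forall>n. \<forall>g\<in>PPF n. \<Psi> n (PQ_basis n g) = phi n g) \<longrightarrow>
              (\<forall>n. \<forall>x\<in>PQ_V n. \<Psi> n x = \<Phi> n x))"
proof (intro exI conjI allI ballI impI)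
  show "shuffle_hom PQ_scale PQ_V PQ_mult sc V mu extension" by (rule extension_hom)
next
  fix n g assume "g \<in> PPF n"
  then show "extension n (PQ_basis n g) = phi n g"
    using extension_PQ_basis basis_image_PPF unfolding PPF_iff by simp
next
  fix \<Psi> n and x :: "nat list \<Rightarrow> 'k"
  assume "shuffle_hom PQ_scale PQ_V PQ_mult sc V mu \<Psi> \<and>
    (\<forall>n. \<forall>g\<in>PPF n. \<Psi> n (PQ_basis n g) = phi n g)" "x \<in> PQ_V n"
  then show "\<Psi> n x = extension n x" using hom_eq_extension by blast
qed

end

theorem mainTheorem2:
  shows "shuffle_alg (PQ_scale :: 'k::field \<Rightarrow> _) PQ_V PQ_mult \<and>
         free_shuffle_alg_on TYPE('b::ab_group_add)
           (PQ_scale :: 'k::field \<Rightarrow> _) PQ_V PQ_mult PPF PQ_basis"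
proof -
  have "PPF 0 = {}" unfolding PPF_def by auto
  moreover have "\<forall>n. \<forall>g\<in>PPF n. (PQ_basis n g :: _ \<Rightarrow> 'k) \<in> PQ_V n"
    by (simp add: PPF_iff PQ_basis_in_PQ_V)
  moreover have "shuffle_target sc V mu \<phi>"
    if "shuffle_alg sc V mu \<and> (\<forall>n. \<forall>g\<in>PPF n. \<phi> n g \<in> V n)"
    for sc :: "'k \<Rightarrow> 'b \<Rightarrow> 'b" and V mu \<phi>
    using that by unfold_locales auto
  ultimately show ?thesis
    unfolding free_shuffle_alg_on_def using PQ_shuffle_alg shuffle_target.universal_property by blast
qed

end
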